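(* Let $\mathbf{\Sigma}$ be a $p\times p$ symmetric positive definite matrix ($p$ fixed), $\mathbf{\Omega}=\mathbf{\Sigma}^{-1}$, $\mathbf{Y}_1,\mathbf{Y}_2,\ldots$ i.i.d. $\mathcal{N}_p(\mathbf{0},\mathbf{\Sigma})$, $\mathbf{S}_n=\frac1n\sum_{i=1}^n\mathbf{Y}_i\mathbf{Y}_i^{\mathrm{T}}$, $\lambda_{a,n}$ nonnegative random variables converging almost surely to $0$, and $\mathbf{T}$ a nonrandom symmetric positive definite matrix. With $$\hat{\mathbf{\Sigma}}_n^{\mathrm{I}a}(\lambda_{a,n}) = \Big[\lambda_{a,n}\mathbf{I}_p+\tfrac14(\mathbf{S}_n-\lambda_{a,n}\mathbf{T})^2\Big]^{1/2}+\tfrac12(\mathbf{S}_n-\lambda_{a,n}\mathbf{T}),$$ one has $\lim_{n\to\infty}\mathbb{E}\big(\|\hat{\mathbf{\Sigma}}_n^{\mathrm{I}a}(\lambda_{a,n})-\mathbf{\Sigma}\|_F^2\big)=0$. Moreover $\hat{\mathbf{\Omega}}_n^{\mathrm{I}a}(\lambda_{a,n})=[\hat{\mathbf{\Sigma}}_n^{\mathrm{I}a}(\lambda_{a,n})]^{-1}$ is a consistent estimator of $\mathbf{\Omega}$ (converges to $\mathbf{\Omega}$ in probability).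
   Context: $\|\cdot\|_F$ is the Frobenius norm. For a real symmetric positive semidefinite matrix $\mathbf{H}$, $\mathbf{H}^{1/2}$ denotes its unique symmetric positive semidefinite square root. *)

theory Defs
  imports "HOL-Analysis.Analysis" "HOL-Probability.Probability"
begin

definition frob_norm :: "real ^ 'n ^ 'm \<Rightarrow> real" where
  "frob_norm A = sqrt (\<Sum>i\<in>UNIV. \<Sum>j\<in>UNIV. (A $ i $ j)\<^sup>2)"

definition symmetric_mat :: "real ^ 'n ^ 'n \<Rightarrow> bool" where
  "symmetric_mat A \<longleftrightarrow> transpose A = A"

definition pos_semidef :: "real ^ 'n ^ 'n \<Rightarrow> bool" where
  "pos_semidef A \<longleftrightarrow> symmetric_mat A \<and> (\<forall>x. 0 \<le> x \<bullet> (A *v x))"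

definition pos_def :: "real ^ 'n ^ 'n \<Rightarrow> bool" where
  "pos_def A \<longleftrightarrow> symmetric_mat A \<and> (\<forall>x. x \<noteq> 0 \<longrightarrow> 0 < x \<bullet> (A *v x))"

definition psd_sqrt :: "real ^ 'n ^ 'n \<Rightarrow> real ^ 'n ^ 'n" where
  "psd_sqrt H = (THE R. pos_semidef R \<and> R ** R = H)"

definition outer :: "real ^ 'n \<Rightarrow> real ^ 'n ^ 'n" where
  "outer y = (\<chi> j k. y $ j * y $ k)"

definition mvn_density :: "real ^ 'n ^ 'n \<Rightarrow> real ^ 'n \<Rightarrow> real" where
  "mvn_density Sig x =
     exp (- (x \<bullet> (matrix_inv Sig *v x)) / 2) / sqrt ((2 * pi) ^ CARD('n) * det Sig)"

text \<open>Sample covariance S_n = (1/n) sum_{i=1}^n Y_i Y_i^T (with Y_1,...,Y_n stored as Y 0, ..., Y (n-1)).\<close>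
definition sample_cov :: "(nat \<Rightarrow> 'a \<Rightarrow> real ^ 'n) \<Rightarrow> nat \<Rightarrow> 'a \<Rightarrow> real ^ 'n ^ 'n" where
  "sample_cov Y n \<omega> = (1 / real n) *\<^sub>R (\<Sum>i<n. outer (Y i \<omega>))"

definition sigma_hat_Ia :: "real ^ 'n ^ 'n \<Rightarrow> real ^ 'n ^ 'n \<Rightarrow> real \<Rightarrow> real ^ 'n ^ 'n" where
  "sigma_hat_Ia S T lam =
     (let D = S - lam *\<^sub>R T in
      psd_sqrt (lam *\<^sub>R mat 1 + (1/4) *\<^sub>R (D ** D)) + (1/2) *\<^sub>R D)"

definition conv_in_prob :: "'a measure \<Rightarrow> (nat \<Rightarrow> 'a \<Rightarrow> real ^ 'n ^ 'm) \<Rightarrow> real ^ 'n ^ 'm \<Rightarrow> bool" where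
  "conv_in_prob M X L \<longleftrightarrow>
     (\<forall>n. X n \<in> borel_measurable M) \<and>
     (\<forall>e>0. (\<lambda>n. measure M {\<omega> \<in> space M. frob_norm (X n \<omega> - L) > e}) \<longlonglongrightarrow> 0)"

end

theory Submission
  imports Defs "HOL-Real_Asymp.Real_Asymp"
begin

(* Write D = S - lam T and R = [lam I + D^2/4]^(1/2), so that the estimator is R + D/2.
   Two deterministic estimates drive the proof.  The estimator grows at most linearly in S: for
   small lam, |R|^2 = tr R^2 is explicit, and for large lam the estimator equals lam (R - D/2)^(-1)
   with R - D/2 >= lam T/4.  Near (S, lam) = (Sigma, 0) it is Lipschitz, because R^2 is then close
   to (Sigma/2)^2 and the square root is Lipschitz at a positive definite matrix.  For Gaussian
   samples E |S_n - Sigma|^2 = O(1/n), and lam_n -> 0 almost surely, hence in probability; splitting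
   the expectation according to whether |S_n - Sigma| and lam_n are small gives mean square
   convergence.  Markov's inequality and continuity of the inverse at Sigma then give consistency
   of the inverse.  The square root is built from the binomial series of 1 - sqrt (1 - x), which
   also exhibits it as a limit of continuous maps and hence as a Borel function. *)

lemma power2_inner_le: "(x \<bullet> y)\<^sup>2 \<le> (norm x)\<^sup>2 * (norm (y::'a::real_inner))\<^sup>2"
  using Cauchy_Schwarz_ineq2[of x y]
  by (metis abs_ge_zero power2_abs power_mono power_mult_distrib)

lemma power2_norm_vec: "(norm (x::real^'n))\<^sup>2 = (\<Sum>i\<in>UNIV. (x $ i)\<^sup>2)"
  by (simp add: norm_vec_def L2_set_def sum_nonneg)

lemma power2_norm_matrix: "(norm (A::real^'n^'m))\<^sup>2 = (\<Sum>i\<in>UNIV. \<Sum>j\<in>UNIV. (A $ i $ j)\<^sup>2)"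
  by (simp add: norm_vec_def L2_set_def sum_nonneg)

lemma frob_norm_eq_norm: "frob_norm A = norm A"
  unfolding frob_norm_def by (metis norm_ge_zero power2_norm_matrix real_sqrt_unique)

lemma power2_norm_matrix_columns:
  "(norm (A::real^'n^'m))\<^sup>2 = (\<Sum>j\<in>UNIV. (norm (A *v axis j 1))\<^sup>2)"
proof -
  have "(A *v axis j 1) $ i = A $ i $ j" for i j
    by (simp add: matrix_vector_mult_def axis_def if_distrib cong: if_cong)
  then show ?thesis by (simp add: power2_norm_matrix power2_norm_vec) (rule sum.swap)
qed

lemma norm_matrix_mul_le:
  fixes A :: "real^'m^'n" and B :: "real^'k^'m"
  shows "norm (A ** B) \<le> norm A * norm B"
proof -
  define c where "c j = (\<chi> k. B $ k $ j)" for j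
  have entry: "(A ** B) $ i $ j = A $ i \<bullet> c j" for i j
    by (simp add: matrix_matrix_mult_def inner_vec_def c_def)
  have "(norm (A ** B))\<^sup>2 = (\<Sum>i\<in>UNIV. \<Sum>j\<in>UNIV. (A $ i \<bullet> c j)\<^sup>2)"
    by (simp add: power2_norm_matrix entry)
  also have "\<dots> \<le> (\<Sum>i\<in>UNIV. \<Sum>j\<in>UNIV. (norm (A $ i))\<^sup>2 * (norm (c j))\<^sup>2)"
    by (intro sum_mono power2_inner_le)
  also have "\<dots> = (\<Sum>i\<in>UNIV. (norm (A $ i))\<^sup>2) * (\<Sum>j\<in>UNIV. (norm (c j))\<^sup>2)"
    by (simp add: sum_product)
  also have "(\<Sum>i\<in>UNIV. (norm (A $ i))\<^sup>2) = (norm A)\<^sup>2"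
    by (simp add: power2_norm_matrix power2_norm_vec)
  also have "(\<Sum>j\<in>UNIV. (norm (c j))\<^sup>2) = (norm B)\<^sup>2"
    unfolding power2_norm_matrix power2_norm_vec c_def vec_lambda_beta by (rule sum.swap)
  finally have "(norm (A ** B))\<^sup>2 \<le> (norm A * norm B)\<^sup>2" by (simp add: power_mult_distrib)
  then show ?thesis by (simp add: power2_le_iff_abs_le)
qed

lemma norm_matrix_vector_mul_le:
  fixes A :: "real^'m^'n"
  shows "norm (A *v x) \<le> norm A * norm x"
proof -
  have entry: "(A *v x) $ i = A $ i \<bullet> x" for i
    by (simp add: matrix_vector_mult_def inner_vec_def mult.commute)
  have "(norm (A *v x))\<^sup>2 = (\<Sum>i\<in>UNIV. (A $ i \<bullet> x)\<^sup>2)"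
    by (simp add: power2_norm_vec entry)
  also have "\<dots> \<le> (\<Sum>i\<in>UNIV. (norm (A $ i))\<^sup>2 * (norm x)\<^sup>2)"
    by (intro sum_mono power2_inner_le)
  also have "\<dots> = (norm A * norm x)\<^sup>2"
    by (simp add: sum_distrib_right[symmetric] power2_norm_matrix power2_norm_vec power_mult_distrib)
  finally show ?thesis by (simp add: power2_le_iff_abs_le)
qed

lemma quadratic_form_le_norm: "x \<bullet> ((A::real^'n^'n) *v x) \<le> norm A * (norm x)\<^sup>2"
proof -
  have "x \<bullet> (A *v x) \<le> norm x * norm (A *v x)" using Cauchy_Schwarz_ineq2[of x "A *v x"] by simp
  also have "\<dots> \<le> norm x * (norm A * norm x)" by (intro mult_left_mono norm_matrix_vector_mul_le) auto
  finally show ?thesis by (simp add: power2_eq_square mult_ac)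
qed

lemma norm_matrix_le_of_norm_mult_le:
  assumes "\<And>x. norm ((A::real^'n^'m) *v x) \<le> K * norm x"
  shows "norm A \<le> sqrt (CARD('n)) * K"
proof -
  have "(norm A)\<^sup>2 \<le> (\<Sum>j\<in>(UNIV::'n set). K\<^sup>2)"
    unfolding power2_norm_matrix_columns
  proof (intro sum_mono)
    fix j :: 'n
    have "norm (A *v axis j 1) \<le> K" using assms[of "axis j 1"] by (simp add: norm_axis_1)
    then show "(norm (A *v axis j 1))\<^sup>2 \<le> K\<^sup>2" by (simp add: power_mono)
  qed
  also have "\<dots> = (sqrt (CARD('n)) * K)\<^sup>2" by (simp add: power_mult_distrib)
  finally have "(norm A)\<^sup>2 \<le> (sqrt (CARD('n)) * K)\<^sup>2" .
  moreover have "0 \<le> K" using assms[of "axis undefined 1"]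
    by (metis norm_ge_zero order_trans mult_1_right norm_axis_1)
  ultimately show ?thesis using power2_le_imp_le[of "norm A" "sqrt (CARD('n)) * K"] by simp
qed

lemma matrix_add_rdistrib: "((A::real^'m^'n) + B) ** C = A ** C + B ** C"
  by (simp add: matrix_matrix_mult_def vec_eq_iff sum.distrib distrib_right)

lemma bounded_bilinear_matrix_mul:
  "bounded_bilinear ((**) :: real^'m^'n \<Rightarrow> real^'k^'m \<Rightarrow> real^'k^'n)"
proof (rule bounded_bilinear.intro)
  show "\<exists>K. \<forall>a b. norm ((a::real^'m^'n) ** (b::real^'k^'m)) \<le> norm a * norm b * K"
    by (rule exI[of _ 1]) (simp add: norm_matrix_mul_le)
qed (auto simp: matrix_add_ldistrib matrix_add_rdistrib matrix_scalar_ac scalar_matrix_assoc)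

lemma bounded_bilinear_matrix_vector_mul:
  "bounded_bilinear ((*v) :: real^'m^'n \<Rightarrow> real^'m \<Rightarrow> real^'n)"
proof (rule bounded_bilinear.intro)
  show "\<exists>K. \<forall>a b. norm ((a::real^'m^'n) *v (b::real^'m)) \<le> norm a * norm b * K"
    by (rule exI[of _ 1]) (simp add: norm_matrix_vector_mul_le)
qed (auto simp: matrix_vector_right_distrib matrix_vector_mult_add_rdistrib
     matrix_vector_mult_scaleR scaleR_matrix_vector_assoc)

lemmas matrix_diff_ldistrib = bounded_bilinear.diff_right[OF bounded_bilinear_matrix_mul]
lemmas matrix_diff_rdistrib = bounded_bilinear.diff_left[OF bounded_bilinear_matrix_mul]

lemma continuous_on_matrix_mul[continuous_intros]:
  "continuous_on S f \<Longrightarrow> continuous_on S g \<Longrightarrow>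
   continuous_on S (\<lambda>x. (f x :: real^'m^'n) ** (g x :: real^'k^'m))"
  by (rule bounded_bilinear.continuous_on[OF bounded_bilinear_matrix_mul])

lemma continuous_on_quadratic_form: "continuous_on S (\<lambda>x::real^'n. x \<bullet> ((A::real^'n^'n) *v x))"
  by (intro continuous_intros linear_continuous_on
      bounded_bilinear.bounded_linear_right[OF bounded_bilinear_matrix_vector_mul])

lemma transpose_add: "transpose ((A::real^'n^'m) + B) = transpose A + transpose B"
  by (simp add: transpose_def vec_eq_iff)

lemma transpose_diff: "transpose ((A::real^'n^'m) - B) = transpose A - transpose B"
  by (simp add: transpose_def vec_eq_iff)

lemma norm_transpose: "norm (transpose (A::real^'n^'m)) = norm A"
proof -
  have "(norm (transpose A))\<^sup>2 = (norm A)\<^sup>2"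
    unfolding power2_norm_matrix transpose_def by simp (rule sum.swap)
  then show ?thesis by (simp add: power2_eq_iff_nonneg)
qed

lemma bounded_linear_transpose: "bounded_linear (transpose :: real^'n^'m \<Rightarrow> real^'m^'n)"
  by (rule bounded_linear_intro[where K=1])
     (auto simp: transpose_def vec_eq_iff norm_transpose[unfolded transpose_def])

lemma trace_scaleR: "trace (c *\<^sub>R (A::real^'n^'n)) = c * trace A"
  by (simp add: trace_def sum_distrib_left)

section \<open>Positive semidefinite matrices\<close>

lemma symmetric_mat_iff: "symmetric_mat A \<longleftrightarrow> (\<forall>i j. A $ i $ j = A $ j $ i)"
  unfolding symmetric_mat_def transpose_def vec_eq_iff by auto

lemma symmetric_mat_inner:
  assumes "symmetric_mat (A::real^'n^'n)"
  shows "x \<bullet> (A *v y) = (A *v x) \<bullet> y"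
proof -
  have 1: "x \<bullet> (A *v y) = (\<Sum>i\<in>UNIV. \<Sum>j\<in>UNIV. x$i * A$i$j * y$j)"
    by (simp add: inner_vec_def matrix_vector_mult_def sum_distrib_left mult.assoc)
  have "(A *v x) \<bullet> y = (\<Sum>i\<in>UNIV. \<Sum>j\<in>UNIV. A$i$j * x$j * y$i)"
    by (simp add: inner_vec_def matrix_vector_mult_def sum_distrib_right)
  also have "\<dots> = (\<Sum>j\<in>UNIV. \<Sum>i\<in>UNIV. A$i$j * x$j * y$i)" by (rule sum.swap)
  also have "\<dots> = (\<Sum>j\<in>UNIV. \<Sum>i\<in>UNIV. x$j * A$j$i * y$i)"
    using assms unfolding symmetric_mat_iff by (simp add: mult_ac)
  finally show ?thesis using 1 by simp
qed

lemma power2_norm_symmetric_mat: "symmetric_mat (R::real^'n^'n) \<Longrightarrow> (norm R)\<^sup>2 = trace (R ** R)"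
  unfolding power2_norm_matrix trace_def matrix_matrix_mult_def symmetric_mat_iff
  by (simp add: power2_eq_square)

lemma norm_mat_1: "norm (mat 1 :: real^'n^'n) = sqrt (CARD('n))"
proof -
  have "(norm (mat 1 :: real^'n^'n))\<^sup>2 = CARD('n)"
    by (subst power2_norm_symmetric_mat) (simp_all add: symmetric_mat_def trace_I)
  then show ?thesis by (metis norm_ge_zero real_sqrt_unique)
qed

lemma discriminant_le_of_nonneg_quadratic:
  fixes a b c :: real
  assumes "\<And>t. 0 \<le> a + 2 * t * b + t\<^sup>2 * c" and "0 \<le> c"
  shows "b\<^sup>2 \<le> a * c"
proof (cases "c = 0")
  case True
  have "b = 0"
  proof (rule ccontr)
    assume "b \<noteq> 0"
    have "0 \<le> a + 2 * (-(a+1)/(2*b)) * b" using assms(1)[of "-(a+1)/(2*b)"] True by simp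
    with \<open>b \<noteq> 0\<close> show False by (simp add: field_simps)
  qed
  then show ?thesis using True by simp
next
  case False
  then have c: "c > 0" using assms(2) by simp
  have "0 \<le> a + 2 * (-b/c) * b + (-b/c)\<^sup>2 * c" by (rule assms(1))
  also have "\<dots> = a - b\<^sup>2 / c" using c by (simp add: field_simps power2_eq_square)
  finally show ?thesis using c by (simp add: field_simps)
qed

lemma pos_semidef_Cauchy_Schwarz:
  assumes "pos_semidef (A::real^'n^'n)"
  shows "(x \<bullet> (A *v y))\<^sup>2 \<le> (x \<bullet> (A *v x)) * (y \<bullet> (A *v y))"
proof -
  have sym: "symmetric_mat A" and nonneg: "\<And>z. 0 \<le> z \<bullet> (A *v z)"
    using assms pos_semidef_def by auto
  have "0 \<le> (x \<bullet> (A *v x)) + 2 * t * (x \<bullet> (A *v y)) + t\<^sup>2 * (y \<bullet> (A *v y))" for t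
  proof -
    have "(x + t *\<^sub>R y) \<bullet> (A *v (x + t *\<^sub>R y))
        = (x \<bullet> (A *v x)) + t * (x \<bullet> (A *v y)) + t * (y \<bullet> (A *v x)) + t\<^sup>2 * (y \<bullet> (A *v y))"
      by (simp add: matrix_vector_right_distrib matrix_vector_mult_scaleR inner_add_left inner_add_right
          power2_eq_square ring_distribs)
    moreover have "y \<bullet> (A *v x) = x \<bullet> (A *v y)"
      using symmetric_mat_inner[OF sym, of y x] by (simp add: inner_commute)
    ultimately show ?thesis using nonneg[of "x + t *\<^sub>R y"] by simp
  qed
  then show ?thesis by (rule discriminant_le_of_nonneg_quadratic) (rule nonneg)
qed

lemma pos_semidef_quadratic_form_eq_0:
  assumes "pos_semidef (A::real^'n^'n)" and "x \<bullet> (A *v x) = 0"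
  shows "A *v x = 0"
proof -
  have sym: "symmetric_mat A" using assms pos_semidef_def by auto
  have "(x \<bullet> (A *v (A *v x)))\<^sup>2 \<le> 0"
    using pos_semidef_Cauchy_Schwarz[OF assms(1), of x "A *v x"] assms(2) by simp
  moreover have "x \<bullet> (A *v (A *v x)) = (A *v x) \<bullet> (A *v x)" using symmetric_mat_inner[OF sym] by simp
  ultimately show ?thesis by simp
qed

lemma pos_semidef_norm_mult_le:
  assumes "pos_semidef (A::real^'n^'n)" and "\<And>x. x \<bullet> (A *v x) \<le> K * (norm x)\<^sup>2"
  shows "norm (A *v x) \<le> K * norm x"
proof -
  have sym: "symmetric_mat A" and nonneg: "\<And>z. 0 \<le> z \<bullet> (A *v z)" using assms pos_semidef_def by auto
  have K: "0 \<le> K" if "x \<noteq> 0" for x :: "real^'n"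
  proof -
    have "0 < (norm x)\<^sup>2" using that by simp
    moreover have "0 \<le> K * (norm x)\<^sup>2" using nonneg[of x] assms(2)[of x] by linarith
    ultimately show ?thesis by (simp add: zero_le_mult_iff)
  qed
  have e: "x \<bullet> (A *v (A *v x)) = (norm (A *v x))\<^sup>2"
    using symmetric_mat_inner[OF sym] by (simp add: power2_norm_eq_inner)
  have "((norm (A *v x))\<^sup>2)\<^sup>2 \<le> (x \<bullet> (A *v x)) * ((A *v x) \<bullet> (A *v (A *v x)))"
    using pos_semidef_Cauchy_Schwarz[OF assms(1), of x "A *v x"] e by simp
  also have "\<dots> \<le> (K * (norm x)\<^sup>2) * (K * (norm (A *v x))\<^sup>2)"
    by (intro mult_mono assms(2) nonneg) (use assms(2) nonneg order_trans in blast)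
  finally have fin: "((norm (A *v x))\<^sup>2)\<^sup>2 \<le> (K * norm x)\<^sup>2 * (norm (A *v x))\<^sup>2"
    by (simp add: power_mult_distrib mult_ac power2_eq_square)
  show ?thesis
  proof (cases "A *v x = 0")
    case True
    then show ?thesis using K[of x] by (cases "x = 0") auto
  next
    case False
    then have "(norm (A *v x))\<^sup>2 \<le> (K * norm x)\<^sup>2"
      using fin by (simp add: power2_eq_square)
    moreover have "x \<noteq> 0" using False by auto
    ultimately show ?thesis using K[of x] by (simp add: power2_le_iff_abs_le)
  qed
qed

lemma pos_semidef_commuting_square_eq:
  assumes R: "pos_semidef (R::real^'n^'n)" and S: "pos_semidef S"
    and sq: "R ** R = S ** S" and comm: "R ** S = S ** R"
  shows "R = S"
proof -
  define E where "E = R - S"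
  have symR: "symmetric_mat R" and symS: "symmetric_mat S" using R S pos_semidef_def by auto
  then have symE: "symmetric_mat E" unfolding E_def symmetric_mat_def by (simp add: transpose_diff)
  have RSE: "(R + S) ** E = 0"
    unfolding E_def using sq comm
    by (simp add: matrix_add_ldistrib matrix_add_rdistrib matrix_diff_ldistrib matrix_diff_rdistrib)
  have "E *v x = 0" for x
  proof -
    define y where "y = E *v x"
    have "y \<bullet> ((R + S) *v y) = 0"
      unfolding y_def matrix_vector_mul_assoc RSE by simp
    then have "y \<bullet> (R *v y) + y \<bullet> (S *v y) = 0"
      by (simp add: matrix_vector_mult_add_rdistrib inner_add_right)
    moreover have "0 \<le> y \<bullet> (R *v y)" "0 \<le> y \<bullet> (S *v y)" using R S pos_semidef_def by auto
    ultimately have "y \<bullet> (R *v y) = 0" "y \<bullet> (S *v y) = 0" by linarith+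
    then have "R *v y = 0" "S *v y = 0" using pos_semidef_quadratic_form_eq_0 R S by blast+
    then have "E *v y = 0" unfolding E_def by (simp add: matrix_vector_mult_diff_rdistrib)
    then have "y \<bullet> y = 0" using symmetric_mat_inner[OF symE, of x y] y_def by simp
    then show ?thesis using y_def by simp
  qed
  then have "E = 0" by (simp add: matrix_eq)
  then show ?thesis unfolding E_def by simp
qed

lemma pos_def_quadratic_form_lower_bound:
  assumes "pos_def (A::real^'n^'n)"
  obtains m where "m > 0" "\<And>x. m * (norm x)\<^sup>2 \<le> x \<bullet> (A *v x)"
proof -
  have ne: "sphere (0::real^'n) 1 \<noteq> {}" by (simp add: sphere_eq_empty)
  obtain x0 where x0: "x0 \<in> sphere 0 1"
    "\<And>y. y \<in> sphere 0 1 \<Longrightarrow> x0 \<bullet> (A *v x0) \<le> y \<bullet> (A *v y)"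
    using continuous_attains_inf[OF compact_sphere ne continuous_on_quadratic_form] by blast
  have "x0 \<noteq> 0" using x0(1) by auto
  then have m: "0 < x0 \<bullet> (A *v x0)" using assms pos_def_def by auto
  have "x0 \<bullet> (A *v x0) * (norm x)\<^sup>2 \<le> x \<bullet> (A *v x)" for x
  proof (cases "x = 0")
    case True
    then show ?thesis by simp
  next
    case False
    define u where "u = (1 / norm x) *\<^sub>R x"
    have u: "u \<in> sphere 0 1" using False unfolding u_def by simp
    have "x \<bullet> (A *v x) = (norm x)\<^sup>2 * (u \<bullet> (A *v u))"
      unfolding u_def using False by (simp add: matrix_vector_mult_scaleR power2_eq_square)
    then show ?thesis using x0(2)[OF u] by (simp add: mult.commute mult_right_mono)
  qed
  then show ?thesis using that m by blast
qed

lemma pos_def_invertible: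
  assumes "pos_def (A::real^'n^'n)"
  shows "invertible A"
proof -
  have "inj ((*v) A)"
  proof (rule injI)
    fix x y assume "A *v x = A *v y"
    then have "A *v (x - y) = 0" by (simp add: matrix_vector_mult_diff_distrib)
    then have "(x - y) \<bullet> (A *v (x - y)) = 0" by simp
    then show "x = y" using assms unfolding pos_def_def by (metis less_irrefl eq_iff_diff_eq_0)
  qed
  moreover have "linear ((*v) A)" by (rule matrix_vector_mul_linear)
  ultimately have "bij ((*v) A)" using linear_injective_imp_surjective bij_def by blast
  then show ?thesis by (simp add: invertible_eq_bij)
qed

lemma inner_matrix_mul_right:
  "(E::real^'n^'n) \<bullet> (E ** R) = (\<Sum>i\<in>UNIV. (E $ i) \<bullet> (R *v (E $ i)))"
proof -
  have "E \<bullet> (E ** R) = (\<Sum>i\<in>UNIV. \<Sum>j\<in>UNIV. \<Sum>k\<in>UNIV. E$i$j * E$i$k * R$k$j)"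
    by (simp add: inner_vec_def matrix_matrix_mult_def sum_distrib_left mult.assoc)
  also have "\<dots> = (\<Sum>i\<in>UNIV. \<Sum>k\<in>UNIV. \<Sum>j\<in>UNIV. E$i$j * E$i$k * R$k$j)"
    by (intro sum.cong refl sum.swap)
  also have "\<dots> = (\<Sum>i\<in>UNIV. (E $ i) \<bullet> (R *v (E $ i)))"
    by (simp add: inner_vec_def matrix_vector_mult_def sum_distrib_left mult_ac)
  finally show ?thesis .
qed

lemma inner_matrix_mul_left:
  "(E::real^'n^'n) \<bullet> (R ** E) = (\<Sum>j\<in>UNIV. (column j E) \<bullet> (R *v column j E))"
proof -
  have "E \<bullet> (R ** E) = (\<Sum>i\<in>UNIV. \<Sum>j\<in>UNIV. E$i$j * (\<Sum>k\<in>UNIV. R$i$k * E$k$j))"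
    by (simp add: inner_vec_def matrix_matrix_mult_def)
  also have "\<dots> = (\<Sum>j\<in>UNIV. \<Sum>i\<in>UNIV. E$i$j * (\<Sum>k\<in>UNIV. R$i$k * E$k$j))"
    by (rule sum.swap)
  also have "\<dots> = (\<Sum>j\<in>UNIV. (column j E) \<bullet> (R *v column j E))"
    by (simp add: inner_vec_def matrix_vector_mult_def column_def)
  finally show ?thesis .
qed

text \<open>With \<open>E = R\<^sub>1 - R\<^sub>2\<close>,
  \<open>\<langle>E, R\<^sub>1\<^sup>2 - R\<^sub>2\<^sup>2\<rangle> = \<langle>E, R\<^sub>1 E\<rangle> + \<langle>E, E R\<^sub>2\<rangle> \<ge> m \<parallel>E\<parallel>\<^sup>2\<close>.\<close>
lemma square_diff_lower_bound:
  fixes R1 R2 :: "real^'n^'n"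
  assumes R1: "pos_semidef R1" and m: "m > 0" "\<And>x. m * (norm x)\<^sup>2 \<le> x \<bullet> (R2 *v x)"
  shows "m * norm (R1 - R2) \<le> norm (R1 ** R1 - R2 ** R2)"
proof -
  define E where "E = R1 - R2"
  have eq: "R1 ** R1 - R2 ** R2 = R1 ** E + E ** R2"
    unfolding E_def by (simp add: matrix_diff_ldistrib matrix_diff_rdistrib)
  have "0 \<le> E \<bullet> (R1 ** E)" unfolding inner_matrix_mul_left
    using R1 pos_semidef_def by (auto intro: sum_nonneg)
  moreover have "m * (norm E)\<^sup>2 \<le> E \<bullet> (E ** R2)"
  proof -
    have "m * (norm E)\<^sup>2 = (\<Sum>i\<in>UNIV. m * (norm (E $ i))\<^sup>2)"
      by (simp add: norm_vec_def L2_set_def sum_nonneg sum_distrib_left)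
    also have "\<dots> \<le> E \<bullet> (E ** R2)" unfolding inner_matrix_mul_right by (intro sum_mono m(2))
    finally show ?thesis .
  qed
  ultimately have "m * (norm E)\<^sup>2 \<le> E \<bullet> (R1 ** R1 - R2 ** R2)"
    unfolding eq by (simp add: inner_add_right)
  also have "\<dots> \<le> norm E * norm (R1 ** R1 - R2 ** R2)"
    by (rule Cauchy_Schwarz_ineq2[THEN order_trans[OF abs_ge_self]])
  finally have *: "m * (norm E)\<^sup>2 \<le> norm E * norm (R1 ** R1 - R2 ** R2)" .
  show ?thesis
  proof (cases "E = 0")
    case False
    then have "norm E > 0" by simp
    then show ?thesis using * unfolding E_def[symmetric] by (simp add: power2_eq_square mult_ac)
  qed (simp add: E_def)
qed


section \<open>The positive semidefinite square root as a power series\<close>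

text \<open>The coefficients of \<open>1 - sqrt (1 - x) = (\<Sum>k. c\<^sub>k x\<^sup>k\<^sup>+\<^sup>1)\<close>: squaring \<open>u = 1 - sqrt (1 - x)\<close>
  gives \<open>u\<^sup>2 = 2 u - x\<close>, which is the recursion below.\<close>
fun sqrt_coeff :: "nat \<Rightarrow> real" where
  "sqrt_coeff 0 = 1/2"
| "sqrt_coeff (Suc k) = (1/2) * (\<Sum>i\<le>k. sqrt_coeff i * sqrt_coeff (k - i))"

lemma sqrt_coeff_nonneg: "0 \<le> sqrt_coeff k"
proof (induction k rule: less_induct)
  case (less k)
  then show ?case by (cases k) (auto intro!: sum_nonneg mult_nonneg_nonneg)
qed

lemma sum_sqrt_coeff_Suc:
  "(\<Sum>k<Suc N. sqrt_coeff k) = 1/2 + (1/2) * (\<Sum>(i,j)\<in>{(i,j). i + j < N}. sqrt_coeff i * sqrt_coeff j)"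
proof -
  have "(\<Sum>k<Suc N. sqrt_coeff k) = sqrt_coeff 0 + (\<Sum>k<N. sqrt_coeff (Suc k))"
    by (rule sum.lessThan_Suc_shift)
  also have "(\<Sum>k<N. sqrt_coeff (Suc k)) = (1/2) * (\<Sum>k<N. \<Sum>i\<le>k. sqrt_coeff i * sqrt_coeff (k-i))"
    by (simp add: sum_distrib_left)
  also have "(\<Sum>k<N. \<Sum>i\<le>k. sqrt_coeff i * sqrt_coeff (k-i))
      = (\<Sum>(i,j)\<in>{(i,j). i + j < N}. sqrt_coeff i * sqrt_coeff j)"
    by (rule sum.triangle_reindex[symmetric])
  finally show ?thesis by simp
qed

lemma sum_sqrt_coeff_triangle_le:
  "(\<Sum>(i,j)\<in>{(i,j). i + j < N}. sqrt_coeff i * sqrt_coeff j) \<le> (\<Sum>k<N. sqrt_coeff k)\<^sup>2"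
proof -
  have "(\<Sum>(i,j)\<in>{(i,j). i + j < N}. sqrt_coeff i * sqrt_coeff j)
      \<le> (\<Sum>(i,j)\<in>{..<N} \<times> {..<N}. sqrt_coeff i * sqrt_coeff j)"
    by (intro sum_mono2) (auto intro: mult_nonneg_nonneg sqrt_coeff_nonneg)
  also have "\<dots> = (\<Sum>k<N. sqrt_coeff k)\<^sup>2"
    by (simp add: sum.cartesian_product[symmetric] power2_eq_square sum_product)
  finally show ?thesis .
qed

lemma sum_sqrt_coeff_le_1: "(\<Sum>k<N. sqrt_coeff k) \<le> 1"
proof (induction N)
  case (Suc N)
  have "0 \<le> (\<Sum>k<N. sqrt_coeff k)" by (intro sum_nonneg sqrt_coeff_nonneg)
  then have "(\<Sum>k<N. sqrt_coeff k)\<^sup>2 \<le> 1" using Suc by (simp add: power_le_one)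
  then show ?case using sum_sqrt_coeff_Suc[of N] sum_sqrt_coeff_triangle_le[of N] by linarith
qed simp

lemma summable_sqrt_coeff: "summable sqrt_coeff"
  by (rule summableI_nonneg_bounded[OF sqrt_coeff_nonneg sum_sqrt_coeff_le_1])

lemma suminf_sqrt_coeff: "(\<Sum>k. sqrt_coeff k) = 1"
proof -
  define s where "s = (\<Sum>k. sqrt_coeff k)"
  have abs: "summable (\<lambda>k. norm (sqrt_coeff k))" using summable_sqrt_coeff sqrt_coeff_nonneg by simp
  have "(\<lambda>k. \<Sum>i\<le>k. sqrt_coeff i * sqrt_coeff (k - i)) sums (s * s)"
    unfolding s_def by (rule Cauchy_product_sums[OF abs abs])
  then have "(\<lambda>k. sqrt_coeff (Suc k)) sums (s * s / 2)"
    using sums_mult[of _ "s * s" "1/2"] by (simp add: mult.commute)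
  then have "sqrt_coeff sums (s * s / 2 + sqrt_coeff 0)" by (rule sums_Suc)
  then have "s = s * s / 2 + 1/2" unfolding s_def by (simp add: sums_iff)
  then have "(s - 1)\<^sup>2 = 0" by (simp add: power2_eq_square algebra_simps)
  then show ?thesis unfolding s_def by simp
qed

lemma sum_sqrt_coeff_square_minus_triangle_tendsto:
  "(\<lambda>N. (\<Sum>k<N. sqrt_coeff k)\<^sup>2 - (\<Sum>(i,j)\<in>{(i,j). i + j < N}. sqrt_coeff i * sqrt_coeff j)) \<longlonglongrightarrow> 0"
proof -
  have lim: "(\<lambda>N. \<Sum>k<N. sqrt_coeff k) \<longlonglongrightarrow> 1"
    using summable_LIMSEQ[OF summable_sqrt_coeff] suminf_sqrt_coeff by simp
  have "(\<lambda>N. (\<Sum>k<N. sqrt_coeff k)\<^sup>2 - (2 * (\<Sum>k<Suc N. sqrt_coeff k) - 1)) \<longlonglongrightarrow> 1\<^sup>2 - (2 * 1 - 1)"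
    by (intro tendsto_intros lim LIMSEQ_Suc[OF lim])
  moreover have "(\<Sum>(i,j)\<in>{(i,j). i + j < N}. sqrt_coeff i * sqrt_coeff j) = 2 * (\<Sum>k<Suc N. sqrt_coeff k) - 1" for N
    using sum_sqrt_coeff_Suc[of N] by simp
  ultimately show ?thesis by simp
qed

fun matpow :: "real^'n^'n \<Rightarrow> nat \<Rightarrow> real^'n^'n" where
  "matpow B 0 = mat 1"
| "matpow B (Suc k) = B ** matpow B k"

lemma matpow_add: "matpow B (i + j) = matpow B i ** matpow B j"
  by (induction i) (simp_all add: matrix_mul_assoc)

lemma matpow_commute: "C ** B = B ** C \<Longrightarrow> C ** matpow B k = matpow B k ** C"
  by (induction k) (simp_all add: matrix_mul_assoc, metis matrix_mul_assoc)

lemma symmetric_matpow: "symmetric_mat B \<Longrightarrow> symmetric_mat (matpow B k)"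
  unfolding symmetric_mat_def
  by (induction k) (simp_all add: matrix_transpose_mul matpow_commute)

lemma continuous_on_matpow[continuous_intros]:
  "continuous_on S f \<Longrightarrow> continuous_on S (\<lambda>x. matpow (f x :: real^'n^'n) k)"
  by (induction k) (auto intro!: continuous_intros)

definition psd_contraction :: "real^'n^'n \<Rightarrow> bool" where
  "psd_contraction B \<longleftrightarrow> pos_semidef B \<and> (\<forall>x. x \<bullet> (B *v x) \<le> (norm x)\<^sup>2)"

lemma psd_contraction_norm_matpow_mult_le:
  "psd_contraction B \<Longrightarrow> norm (matpow B k *v x) \<le> norm x"
proof (induction k arbitrary: x)
  case (Suc k)
  have "norm (B *v (matpow B k *v x)) \<le> 1 * norm (matpow B k *v x)"
    using Suc.prems unfolding psd_contraction_def by (intro pos_semidef_norm_mult_le) auto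
  also have "\<dots> \<le> norm x" using Suc.IH[OF Suc.prems] by simp
  finally show ?case by (simp add: matrix_vector_mul_assoc[symmetric])
qed simp

lemma psd_contraction_norm_matpow_le:
  fixes B :: "real^'n^'n"
  assumes "psd_contraction B" shows "norm (matpow B k) \<le> sqrt (CARD('n))"
  using norm_matrix_le_of_norm_mult_le[of "matpow B k" 1] psd_contraction_norm_matpow_mult_le[OF assms]
  by simp

lemma psd_contraction_rescale:
  assumes A: "pos_semidef (A::real^'n^'n)"
  shows "psd_contraction (mat 1 - (1 / (norm A + 1)) *\<^sub>R A)"
proof -
  define c where "c = norm A + 1"
  have c: "c > 0" unfolding c_def by (simp add: add_nonneg_pos)
  define B where "B = mat 1 - (1/c) *\<^sub>R A"
  have sA: "symmetric_mat A" and nnA: "\<And>x. 0 \<le> x \<bullet> (A *v x)" using A pos_semidef_def by auto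
  have qfB: "x \<bullet> (B *v x) = (norm x)\<^sup>2 - (x \<bullet> (A *v x)) / c" for x
    unfolding B_def by (simp add: matrix_vector_mult_diff_rdistrib scaleR_matrix_vector_assoc[symmetric]
        inner_diff_right power2_norm_eq_inner)
  have "psd_contraction B"
    unfolding psd_contraction_def pos_semidef_def
  proof (intro conjI allI)
    show "symmetric_mat B" using sA unfolding B_def symmetric_mat_def
      by (simp add: transpose_diff transpose_scalar)
    fix x :: "real^'n"
    show "x \<bullet> (B *v x) \<le> (norm x)\<^sup>2" using qfB[of x] nnA[of x] c by (simp add: divide_nonneg_pos)
    have "x \<bullet> (A *v x) \<le> c * (norm x)\<^sup>2"
      using quadratic_form_le_norm[of x A] unfolding c_def distrib_right by (smt (verit) zero_le_power2 mult_1)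
    then have "(x \<bullet> (A *v x)) / c \<le> (norm x)\<^sup>2" using c by (simp add: divide_le_eq mult.commute)
    then show "0 \<le> x \<bullet> (B *v x)" using qfB[of x] by simp
  qed
  then show ?thesis unfolding B_def c_def .
qed

text \<open>The series for \<open>I - sqrt (I - B)\<close>.\<close>
definition sqrt_series :: "real^'n^'n \<Rightarrow> real^'n^'n" where
  "sqrt_series B = (\<Sum>k. sqrt_coeff k *\<^sub>R matpow B (Suc k))"

lemma summable_sqrt_series:
  assumes "psd_contraction (B::real^'n^'n)"
  shows "summable (\<lambda>k. sqrt_coeff k *\<^sub>R matpow B (Suc k))"
proof (rule summable_comparison_test')
  show "summable (\<lambda>k. sqrt_coeff k * sqrt (CARD('n)))" by (intro summable_mult2 summable_sqrt_coeff)
  show "norm (sqrt_coeff k *\<^sub>R matpow B (Suc k)) \<le> sqrt_coeff k * sqrt (CARD('n))" for k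
    using psd_contraction_norm_matpow_le[OF assms, of "Suc k"] sqrt_coeff_nonneg[of k]
    by (simp add: mult_left_mono)
qed

lemma sqrt_series_commute:
  assumes "psd_contraction (B::real^'n^'n)" and "C ** B = B ** C"
  shows "C ** sqrt_series B = sqrt_series B ** C"
proof -
  note sums = summable_sqrt_series[OF assms(1)]
  have "C ** sqrt_series B = (\<Sum>k. C ** (sqrt_coeff k *\<^sub>R matpow B (Suc k)))"
    unfolding sqrt_series_def
    by (rule bounded_linear.suminf[OF bounded_bilinear.bounded_linear_right[OF bounded_bilinear_matrix_mul] sums])
  also have "\<dots> = (\<Sum>k. (sqrt_coeff k *\<^sub>R matpow B (Suc k)) ** C)"
    using matpow_commute[OF assms(2)]
    by (simp del: matpow.simps add: matrix_scalar_ac scalar_matrix_assoc[symmetric])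
  also have "\<dots> = sqrt_series B ** C"
    unfolding sqrt_series_def
    by (rule bounded_linear.suminf[OF bounded_bilinear.bounded_linear_left[OF bounded_bilinear_matrix_mul] sums,
          symmetric])
  finally show ?thesis .
qed

lemma symmetric_sqrt_series:
  assumes "psd_contraction (B::real^'n^'n)"
  shows "symmetric_mat (sqrt_series B)"
proof -
  have "symmetric_mat B" using assms unfolding psd_contraction_def pos_semidef_def by auto
  have "transpose (sqrt_series B) = (\<Sum>k. transpose (sqrt_coeff k *\<^sub>R matpow B (Suc k)))"
    unfolding sqrt_series_def
    by (rule bounded_linear.suminf[OF bounded_linear_transpose summable_sqrt_series[OF assms]])
  also have "\<dots> = sqrt_series B"
    using symmetric_matpow[OF \<open>symmetric_mat B\<close>]
    unfolding sqrt_series_def transpose_scalar symmetric_mat_def by (simp del: matpow.simps)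
  finally show ?thesis unfolding symmetric_mat_def .
qed

lemma quadratic_form_sqrt_series_le:
  assumes "psd_contraction (B::real^'n^'n)"
  shows "x \<bullet> (sqrt_series B *v x) \<le> (norm x)\<^sup>2"
proof -
  note sums = summable_sqrt_series[OF assms]
  have lin: "bounded_linear (\<lambda>A::real^'n^'n. x \<bullet> (A *v x))"
    by (intro bounded_linear_compose[OF bounded_linear_inner_right]
        bounded_bilinear.bounded_linear_left[OF bounded_bilinear_matrix_vector_mul])
  have "x \<bullet> (sqrt_series B *v x) = (\<Sum>k. x \<bullet> ((sqrt_coeff k *\<^sub>R matpow B (Suc k)) *v x))"
    unfolding sqrt_series_def by (rule bounded_linear.suminf[OF lin sums])
  also have "\<dots> \<le> (\<Sum>k. sqrt_coeff k * (norm x)\<^sup>2)"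
  proof (rule suminf_le)
    show "summable (\<lambda>k. x \<bullet> ((sqrt_coeff k *\<^sub>R matpow B (Suc k)) *v x))"
      by (rule bounded_linear.summable[OF lin sums])
    show "summable (\<lambda>k. sqrt_coeff k * (norm x)\<^sup>2)" by (intro summable_mult2 summable_sqrt_coeff)
    fix k
    have "x \<bullet> (matpow B (Suc k) *v x) \<le> norm x * norm (matpow B (Suc k) *v x)"
      using Cauchy_Schwarz_ineq2[of x "matpow B (Suc k) *v x"] by simp
    also have "\<dots> \<le> norm x * norm x"
      using psd_contraction_norm_matpow_mult_le[OF assms, of "Suc k" x]
      by (intro mult_left_mono) (simp_all del: matpow.simps)
    finally have "x \<bullet> (matpow B (Suc k) *v x) \<le> (norm x)\<^sup>2" by (simp add: power2_eq_square)
    then show "x \<bullet> ((sqrt_coeff k *\<^sub>R matpow B (Suc k)) *v x) \<le> sqrt_coeff k * (norm x)\<^sup>2"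
      using sqrt_coeff_nonneg[of k]
      by (simp del: matpow.simps add: scaleR_matrix_vector_assoc[symmetric] mult_left_mono)
  qed
  also have "\<dots> = (norm x)\<^sup>2"
    using suminf_sqrt_coeff by (simp add: suminf_mult2[OF summable_sqrt_coeff, symmetric])
  finally show ?thesis .
qed

definition sqrt_series_partial :: "real^'n^'n \<Rightarrow> nat \<Rightarrow> real^'n^'n" where
  "sqrt_series_partial B N = (\<Sum>k<N. sqrt_coeff k *\<^sub>R matpow B (Suc k))"

lemma sqrt_series_partial_square:
  "sqrt_series_partial B N ** sqrt_series_partial B N - (2 *\<^sub>R sqrt_series_partial B (Suc N) - B)
    = (\<Sum>(i,j)\<in>{..<N} \<times> {..<N} - {(i,j). i + j < N}.
         (sqrt_coeff i * sqrt_coeff j) *\<^sub>R matpow B (i + j + 2))"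
proof -
  define f where "f k = sqrt_coeff k *\<^sub>R matpow B (Suc k)" for k
  define g where "g = (\<lambda>(i,j). (sqrt_coeff i * sqrt_coeff j) *\<^sub>R matpow B (i + j + 2))"
  have square: "sqrt_series_partial B N ** sqrt_series_partial B N = (\<Sum>x\<in>{..<N} \<times> {..<N}. g x)"
  proof -
    have "sqrt_series_partial B N ** sqrt_series_partial B N = (\<Sum>i<N. \<Sum>j<N. f i ** f j)"
      unfolding sqrt_series_partial_def f_def
      by (simp add: bounded_bilinear.sum_left[OF bounded_bilinear_matrix_mul]
          bounded_bilinear.sum_right[OF bounded_bilinear_matrix_mul]) (rule sum.swap)
    also have "\<dots> = (\<Sum>i<N. \<Sum>j<N. g (i,j))"
    proof (intro sum.cong refl)
      fix i j
      have "matpow B (i + j + 2) = matpow B (Suc i) ** matpow B (Suc j)"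
        using matpow_add[of B "Suc i" "Suc j"] by simp
      then show "f i ** f j = g (i,j)" unfolding f_def g_def
        by (simp del: matpow.simps add: matrix_scalar_ac scalar_matrix_assoc[symmetric] mult.commute)
    qed
    finally show ?thesis by (simp add: sum.cartesian_product)
  qed
  have triangle: "2 *\<^sub>R sqrt_series_partial B (Suc N) - B = (\<Sum>x\<in>{(i,j). i + j < N}. g x)"
  proof -
    have "2 *\<^sub>R sqrt_series_partial B (Suc N) - B = (\<Sum>k<N. 2 *\<^sub>R f (Suc k))"
      unfolding sqrt_series_partial_def sum.lessThan_Suc_shift
      by (simp add: f_def scaleR_sum_right scaleR_add_right)
    also have "\<dots> = (\<Sum>k<N. \<Sum>i\<le>k. g (i, k - i))"
    proof (rule sum.cong[OF refl])
      fix k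
      have "2 *\<^sub>R f (Suc k) = (\<Sum>i\<le>k. (sqrt_coeff i * sqrt_coeff (k - i)) *\<^sub>R matpow B (k + 2))"
        unfolding f_def by (simp add: scaleR_left.sum)
      also have "\<dots> = (\<Sum>i\<le>k. g (i, k - i))"
        unfolding g_def by (intro sum.cong) auto
      finally show "2 *\<^sub>R f (Suc k) = (\<Sum>i\<le>k. g (i, k - i))" .
    qed
    also have "\<dots> = (\<Sum>x\<in>{(i,j). i + j < N}. g x)"
      using sum.triangle_reindex[of "\<lambda>i j. g (i,j)" N] by simp
    finally show ?thesis .
  qed
  have "{(i,j). i + j < N} \<subseteq> {..<N} \<times> {..<N}" by auto
  then show ?thesis
    unfolding square triangle g_def by (simp add: sum.subset_diff[of _ "{..<N} \<times> {..<N}"])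
qed

lemma sqrt_series_square:
  assumes B: "psd_contraction (B::real^'n^'n)"
  shows "sqrt_series B ** sqrt_series B = 2 *\<^sub>R sqrt_series B - B"
proof -
  define P where "P = sqrt_series_partial B"
  define sq where "sq N = {..<N} \<times> {..<(N::nat)}" for N
  define tri where "tri N = {(i,j). i + j < (N::nat)}" for N
  define w where "w = (\<lambda>(i,j). sqrt_coeff i * sqrt_coeff j)"
  have P: "P \<longlonglongrightarrow> sqrt_series B"
    unfolding P_def sqrt_series_partial_def[abs_def] sqrt_series_def
    by (rule summable_LIMSEQ[OF summable_sqrt_series[OF B]])
  have bound: "norm (P N ** P N - (2 *\<^sub>R P (Suc N) - B)) \<le> sqrt (CARD('n)) * (sum w (sq N) - sum w (tri N))"
    for N
  proof -
    have sub: "tri N \<subseteq> sq N" unfolding tri_def sq_def by auto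
    have "norm (P N ** P N - (2 *\<^sub>R P (Suc N) - B))
        \<le> (\<Sum>(i,j)\<in>sq N - tri N. norm ((sqrt_coeff i * sqrt_coeff j) *\<^sub>R matpow B (i + j + 2)))"
      unfolding P_def sqrt_series_partial_square sq_def tri_def
      by (rule order_trans[OF norm_sum]) (simp add: case_prod_unfold)
    also have "\<dots> \<le> (\<Sum>x\<in>sq N - tri N. w x * sqrt (CARD('n)))"
      unfolding w_def using psd_contraction_norm_matpow_le[OF B] sqrt_coeff_nonneg
      by (intro sum_mono) (auto simp del: matpow.simps intro!: mult_left_mono)
    also have "\<dots> = sqrt (CARD('n)) * (sum w (sq N) - sum w (tri N))"
      using sum.subset_diff[OF sub, of w] unfolding sq_def
      by (simp add: sum_distrib_right[symmetric] mult.commute)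
    finally show ?thesis .
  qed
  have "sum w (sq N) = (\<Sum>k<N. sqrt_coeff k)\<^sup>2" for N
    unfolding sq_def w_def by (simp add: sum.cartesian_product[symmetric] power2_eq_square sum_product)
  then have "(\<lambda>N. sqrt (CARD('n)) * (sum w (sq N) - sum w (tri N))) \<longlonglongrightarrow> 0"
    unfolding tri_def w_def using tendsto_mult_right_zero[OF sum_sqrt_coeff_square_minus_triangle_tendsto]
    by simp
  then have "(\<lambda>N. P N ** P N - (2 *\<^sub>R P (Suc N) - B)) \<longlonglongrightarrow> 0"
    by (rule Lim_null_comparison[rotated]) (use bound in simp)
  moreover have "(\<lambda>N. P N ** P N - (2 *\<^sub>R P (Suc N) - B)) \<longlonglongrightarrow> sqrt_series B ** sqrt_series B - (2 *\<^sub>R sqrt_series B - B)"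
    by (intro tendsto_intros bounded_bilinear.tendsto[OF bounded_bilinear_matrix_mul P P] LIMSEQ_Suc[OF P])
  ultimately show ?thesis using LIMSEQ_unique by fastforce
qed

text \<open>Rescaling by \<open>c = \<parallel>A\<parallel> + 1\<close> makes \<open>I - A/c\<close> a contraction, and then
  \<open>(I - U)\<^sup>2 = I - (I - A/c)\<close> for \<open>U = sqrt_series (I - A/c)\<close>.\<close>
definition series_sqrt :: "real^'n^'n \<Rightarrow> real^'n^'n" where
  "series_sqrt A = sqrt (norm A + 1) *\<^sub>R (mat 1 - sqrt_series (mat 1 - (1 / (norm A + 1)) *\<^sub>R A))"

lemma series_sqrt:
  assumes A: "pos_semidef (A::real^'n^'n)"
  shows "pos_semidef (series_sqrt A)" "series_sqrt A ** series_sqrt A = A"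
    "\<And>C. C ** A = A ** C \<Longrightarrow> C ** series_sqrt A = series_sqrt A ** C"
proof -
  define c where "c = norm A + 1"
  have c: "c > 0" unfolding c_def by (simp add: add_nonneg_pos)
  define B where "B = mat 1 - (1/c) *\<^sub>R A"
  define U where "U = sqrt_series B"
  have B: "psd_contraction B" unfolding B_def c_def by (rule psd_contraction_rescale[OF A])
  have root: "series_sqrt A = sqrt c *\<^sub>R (mat 1 - U)" unfolding series_sqrt_def U_def B_def c_def ..
  have "(mat 1 - U) ** (mat 1 - U) = mat 1 - 2 *\<^sub>R U + U ** U"
    by (simp add: matrix_diff_ldistrib matrix_diff_rdistrib algebra_simps scaleR_2)
  also have "\<dots> = mat 1 - B" unfolding U_def sqrt_series_square[OF B] by simp
  also have "\<dots> = (1/c) *\<^sub>R A" unfolding B_def by simp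
  finally show "series_sqrt A ** series_sqrt A = A"
    unfolding root using c by (simp add: matrix_scalar_ac scalar_matrix_assoc[symmetric])
  show "pos_semidef (series_sqrt A)"
    unfolding pos_semidef_def root
  proof (intro conjI allI)
    show "symmetric_mat (sqrt c *\<^sub>R (mat 1 - U))"
      using symmetric_sqrt_series[OF B] unfolding U_def symmetric_mat_def
      by (simp add: transpose_scalar transpose_diff)
    fix x :: "real^'n"
    have "x \<bullet> ((mat 1 - U) *v x) = (norm x)\<^sup>2 - x \<bullet> (U *v x)"
      by (simp add: matrix_vector_mult_diff_rdistrib inner_diff_right power2_norm_eq_inner)
    then have "0 \<le> x \<bullet> ((mat 1 - U) *v x)"
      using quadratic_form_sqrt_series_le[OF B, of x] unfolding U_def by simp
    then show "0 \<le> x \<bullet> ((sqrt c *\<^sub>R (mat 1 - U)) *v x)"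
      using c by (simp add: scaleR_matrix_vector_assoc[symmetric])
  qed
  fix C assume "C ** A = A ** C"
  then have "C ** B = B ** C" unfolding B_def
    by (simp add: matrix_diff_ldistrib matrix_diff_rdistrib matrix_scalar_ac scalar_matrix_assoc[symmetric])
  then have "C ** U = U ** C" unfolding U_def by (rule sqrt_series_commute[OF B])
  then show "C ** series_sqrt A = series_sqrt A ** C" unfolding root
    by (simp add: matrix_diff_ldistrib matrix_diff_rdistrib matrix_scalar_ac scalar_matrix_assoc[symmetric]
        scaleR_diff_right)
qed

lemma psd_sqrt_eq_series_sqrt:
  assumes A: "pos_semidef (A::real^'n^'n)"
  shows "psd_sqrt A = series_sqrt A"
  unfolding psd_sqrt_def
proof (rule the_equality)
  show "pos_semidef (series_sqrt A) \<and> series_sqrt A ** series_sqrt A = A"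
    using series_sqrt(1,2)[OF A] by blast
  fix R assume R: "pos_semidef R \<and> R ** R = A"
  then have "R ** A = A ** R" by (auto simp: matrix_mul_assoc)
  then have "R ** series_sqrt A = series_sqrt A ** R" by (rule series_sqrt(3)[OF A])
  then show "R = series_sqrt A"
    using pos_semidef_commuting_square_eq[of R "series_sqrt A"] R series_sqrt(1,2)[OF A] by auto
qed

lemma
  assumes "pos_semidef (A::real^'n^'n)"
  shows pos_semidef_psd_sqrt: "pos_semidef (psd_sqrt A)"
    and psd_sqrt_square: "psd_sqrt A ** psd_sqrt A = A"
    and psd_sqrt_commute: "C ** A = A ** C \<Longrightarrow> C ** psd_sqrt A = psd_sqrt A ** C"
  unfolding psd_sqrt_eq_series_sqrt[OF assms] using series_sqrt[OF assms] by blast+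

lemma borel_measurable_psd_sqrt:
  assumes f: "f \<in> borel_measurable M" and psd: "\<And>x. x \<in> space M \<Longrightarrow> pos_semidef (f x :: real^'n^'n)"
  shows "(\<lambda>x. psd_sqrt (f x)) \<in> borel_measurable M"
proof (rule borel_measurable_LIMSEQ_metric)
  define approx where "approx N A = sqrt (norm A + 1) *\<^sub>R
      (mat 1 - sqrt_series_partial (mat 1 - (1 / (norm A + 1)) *\<^sub>R A) N)" for N and A :: "real^'n^'n"
  have "continuous_on UNIV (approx N)" for N
  proof -
    have "norm (A::real^'n^'n) + 1 \<noteq> 0" for A by (smt (verit) norm_ge_zero)
    then show ?thesis unfolding approx_def sqrt_series_partial_def
      by (intro continuous_intros continuous_on_sum) auto
  qed
  then show "(\<lambda>x. approx N (f x)) \<in> borel_measurable M" for N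
    by (rule borel_measurable_continuous_on[OF _ f])
  show "(\<lambda>N. approx N (f x)) \<longlonglongrightarrow> psd_sqrt (f x)" if "x \<in> space M" for x
  proof -
    note B = psd_contraction_rescale[OF psd[OF that]]
    show ?thesis
      unfolding approx_def psd_sqrt_eq_series_sqrt[OF psd[OF that]] series_sqrt_def
        sqrt_series_partial_def sqrt_series_def
      by (intro tendsto_intros summable_LIMSEQ[OF summable_sqrt_series[OF B]])
  qed
qed

section \<open>Deterministic bounds for the estimator\<close>

lemma sigma_hat_Ia_structure:
  fixes S T :: "real^'n^'n"
  assumes S: "symmetric_mat S" and T: "symmetric_mat T" and lam: "0 \<le> lam"
  defines "D \<equiv> S - lam *\<^sub>R T"
  defines "H \<equiv> lam *\<^sub>R mat 1 + (1/4) *\<^sub>R (D ** D)"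
  defines "R \<equiv> psd_sqrt H"
  shows "symmetric_mat D" "pos_semidef H" "pos_semidef R" "R ** R = H" "R ** D = D ** R"
     "sigma_hat_Ia S T lam = R + (1/2) *\<^sub>R D"
proof -
  show sD: "symmetric_mat D" using S T unfolding D_def symmetric_mat_def
    by (simp add: transpose_diff transpose_scalar)
  show H: "pos_semidef H" unfolding pos_semidef_def
  proof (intro conjI allI)
    show "symmetric_mat H" using sD unfolding H_def symmetric_mat_def
      by (simp add: transpose_add transpose_scalar matrix_transpose_mul)
    fix x :: "real^'n"
    have "x \<bullet> (H *v x) = lam * (x \<bullet> x) + (1/4) * (x \<bullet> (D *v (D *v x)))"
      unfolding H_def
      by (simp add: matrix_vector_mult_add_rdistrib scaleR_matrix_vector_assoc[symmetric]
          inner_add_right matrix_vector_mul_assoc[symmetric])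
    also have "x \<bullet> (D *v (D *v x)) = (D *v x) \<bullet> (D *v x)" by (rule symmetric_mat_inner[OF sD])
    finally show "0 \<le> x \<bullet> (H *v x)" using lam by simp
  qed
  show "pos_semidef R" "R ** R = H"
    unfolding R_def using pos_semidef_psd_sqrt[OF H] psd_sqrt_square[OF H] by blast+
  have "D ** H = H ** D" unfolding H_def
    by (simp add: matrix_add_ldistrib matrix_add_rdistrib matrix_scalar_ac scalar_matrix_assoc[symmetric]
        matrix_mul_assoc)
  then show "R ** D = D ** R" unfolding R_def by (rule psd_sqrt_commute[OF H, symmetric])
  show "sigma_hat_Ia S T lam = R + (1/2) *\<^sub>R D"
    unfolding sigma_hat_Ia_def R_def H_def D_def Let_def ..
qed

lemma norm_sigma_hat_Ia_le:
  fixes S T :: "real^'n^'n"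
  assumes "symmetric_mat S" "symmetric_mat T" "0 \<le> lam"
  shows "norm (sigma_hat_Ia S T lam) \<le> sqrt (lam * CARD('n)) + norm S + lam * norm T"
proof -
  define D where "D = S - lam *\<^sub>R T"
  define H where "H = lam *\<^sub>R mat 1 + (1/4) *\<^sub>R (D ** D)"
  define R where "R = psd_sqrt H"
  note F = sigma_hat_Ia_structure[OF assms, folded D_def, folded H_def, folded R_def]
  have "symmetric_mat R" using F(3) pos_semidef_def by auto
  then have "(norm R)\<^sup>2 = trace (R ** R)" by (rule power2_norm_symmetric_mat)
  also have "\<dots> = trace H" using F(4) by simp
  also have "\<dots> = lam * CARD('n) + (1/4) * (norm D)\<^sup>2"
    unfolding H_def using power2_norm_symmetric_mat[OF F(1)]
    by (simp add: trace_add trace_scaleR trace_I)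
  also have "\<dots> \<le> (sqrt (lam * CARD('n)) + norm D / 2)\<^sup>2"
    using assms(3) by (simp add: power2_eq_square algebra_simps)
  finally have "norm R \<le> sqrt (lam * CARD('n)) + norm D / 2"
    by (rule power2_le_imp_le) (simp add: assms(3))
  moreover have "norm D \<le> norm S + lam * norm T"
    unfolding D_def using norm_triangle_ineq4[of S "lam *\<^sub>R T"] assms(3) by simp
  ultimately show ?thesis
    unfolding F(6) using norm_triangle_ineq[of R "(1/2) *\<^sub>R D"] by simp
qed

lemma quadratic_form_bounds_of_mult_eq_scaleR_mat_1:
  fixes X Y :: "real^'n^'n"
  assumes XY: "X ** Y = lam *\<^sub>R mat 1" and YX: "Y ** X = lam *\<^sub>R mat 1" and lam: "0 < lam"
    and c: "0 < c" and Y: "\<And>x. c * (norm x)\<^sup>2 \<le> x \<bullet> (Y *v x)"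
  shows "0 \<le> x \<bullet> (X *v x)" "x \<bullet> (X *v x) \<le> (lam / c) * (norm x)\<^sup>2"
proof -
  define z where "z = (1 / lam) *\<^sub>R (X *v x)"
  have Yz: "Y *v z = x" unfolding z_def using lam
    by (simp add: matrix_vector_mult_scaleR matrix_vector_mul_assoc YX scaleR_matrix_vector_assoc[symmetric])
  have "X *v (Y *v z) = lam *\<^sub>R z"
    by (simp add: matrix_vector_mul_assoc XY scaleR_matrix_vector_assoc[symmetric])
  then have e: "x \<bullet> (X *v x) = lam * (z \<bullet> (Y *v z))"
    using Yz by (simp add: inner_commute)
  have lower: "c * (norm z)\<^sup>2 \<le> z \<bullet> (Y *v z)" by (rule Y)
  have upper: "z \<bullet> (Y *v z) \<le> norm z * norm x"
    using Cauchy_Schwarz_ineq2[of z "Y *v z"] Yz by simp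
  have "0 \<le> z \<bullet> (Y *v z)" using lower c by (smt (verit) mult_nonneg_nonneg zero_le_power2)
  then show "0 \<le> x \<bullet> (X *v x)" using e lam by simp
  have "c * norm z \<le> norm x"
  proof (cases "z = 0")
    case False
    have "c * (norm z)\<^sup>2 \<le> norm z * norm x" using lower upper by linarith
    then have "(c * norm z) * norm z \<le> norm x * norm z"
      by (metis power2_eq_square mult.assoc mult.commute)
    then show ?thesis using False by (simp add: mult_right_le_imp_le)
  qed simp
  then have "norm z \<le> norm x / c" using c by (simp add: le_divide_eq mult.commute)
  then have "z \<bullet> (Y *v z) \<le> (norm x / c) * norm x"
    using upper by (meson mult_right_mono norm_ge_zero order_trans)
  then have "lam * (z \<bullet> (Y *v z)) \<le> lam * ((norm x / c) * norm x)"
    using lam by (intro mult_left_mono) auto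
  then show "x \<bullet> (X *v x) \<le> (lam / c) * (norm x)\<^sup>2"
    using e by (simp add: power2_eq_square mult_ac)
qed

text \<open>For large \<open>lam\<close> the estimator is \<open>lam (R - D/2)\<^sup>-\<^sup>1\<close> with \<open>R - D/2 \<ge> lam T / 4\<close>.\<close>
lemma norm_sigma_hat_Ia_le_large_lam:
  fixes S T :: "real^'n^'n"
  assumes S: "pos_semidef S" and T: "symmetric_mat T"
    and t: "0 < t" "\<And>x. t * (norm x)\<^sup>2 \<le> x \<bullet> (T *v x)" and large: "2 * norm S < lam * t"
  shows "norm (sigma_hat_Ia S T lam) \<le> 4 * sqrt (CARD('n)) / t"
proof -
  have lam: "0 < lam" using large t by (smt (verit) norm_ge_zero zero_less_mult_iff)
  define D where "D = S - lam *\<^sub>R T"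
  define H where "H = lam *\<^sub>R mat 1 + (1/4) *\<^sub>R (D ** D)"
  define R where "R = psd_sqrt H"
  note F = sigma_hat_Ia_structure[OF _ T, of S lam, folded D_def, folded H_def, folded R_def]
  have sS: "symmetric_mat S" using S pos_semidef_def by auto
  note F = F[OF sS less_imp_le[OF lam]]
  define X where "X = R + (1/2) *\<^sub>R D"
  define Y where "Y = R - (1/2) *\<^sub>R D"
  have Y: "(lam * t / 4) * (norm x)\<^sup>2 \<le> x \<bullet> (Y *v x)" for x
  proof -
    have q: "x \<bullet> (Y *v x) = x \<bullet> (R *v x) - (1/2) * (x \<bullet> (S *v x)) + (1/2) * lam * (x \<bullet> (T *v x))"
      unfolding Y_def D_def
      by (simp add: matrix_vector_mult_diff_rdistrib scaleR_matrix_vector_assoc[symmetric]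
          inner_diff_right algebra_simps)
    have "0 \<le> x \<bullet> (R *v x)" using F(3) pos_semidef_def by auto
    moreover have "x \<bullet> (S *v x) \<le> norm S * (norm x)\<^sup>2" by (rule quadratic_form_le_norm)
    moreover have "lam * (t * (norm x)\<^sup>2) \<le> lam * (x \<bullet> (T *v x))"
      using t(2) lam by (intro mult_left_mono) auto
    moreover have "norm S * (norm x)\<^sup>2 \<le> (lam * t / 2) * (norm x)\<^sup>2"
      using large by (intro mult_right_mono) auto
    ultimately show ?thesis unfolding q by (simp add: algebra_simps)
  qed
  have "X ** Y = R ** R - (1/4) *\<^sub>R (D ** D)" "Y ** X = R ** R - (1/4) *\<^sub>R (D ** D)"
    unfolding X_def Y_def using F(5)
    by (simp_all add: matrix_diff_ldistrib matrix_diff_rdistrib matrix_add_ldistrib matrix_add_rdistrib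
        matrix_scalar_ac scalar_matrix_assoc[symmetric] algebra_simps)
  then have XY: "X ** Y = lam *\<^sub>R mat 1" and YX: "Y ** X = lam *\<^sub>R mat 1"
    unfolding F(4) H_def by simp_all
  have "lam / (lam * t / 4) = 4 / t" using lam by simp
  then have qX: "0 \<le> x \<bullet> (X *v x)" "x \<bullet> (X *v x) \<le> (4 / t) * (norm x)\<^sup>2" for x
    using quadratic_form_bounds_of_mult_eq_scaleR_mat_1[OF XY YX lam _ Y] lam t(1) by auto
  have "symmetric_mat X" using F(1,3) unfolding X_def symmetric_mat_def pos_semidef_def
    by (simp add: transpose_add transpose_scalar)
  then have "pos_semidef X" unfolding pos_semidef_def using qX by auto
  then have "norm (X *v x) \<le> (4 / t) * norm x" for x
    by (rule pos_semidef_norm_mult_le) (use qX in auto)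
  then have "norm X \<le> sqrt (CARD('n)) * (4 / t)" by (rule norm_matrix_le_of_norm_mult_le)
  also have "\<dots> = 4 * sqrt (CARD('n)) / t" by simp
  finally show ?thesis unfolding F(6) X_def[symmetric] .
qed

lemma sigma_hat_Ia_linear_growth:
  fixes T :: "real^'n^'n"
  assumes T: "pos_def T"
  obtains K where "0 \<le> K"
    "\<And>S lam. pos_semidef S \<Longrightarrow> 0 \<le> lam \<Longrightarrow> norm (sigma_hat_Ia S T lam) \<le> K * (1 + norm S)"
proof -
  obtain t where t: "t > 0" "\<And>x. t * (norm x)\<^sup>2 \<le> x \<bullet> (T *v x)"
    using pos_def_quadratic_form_lower_bound[OF T] by blast
  have sT: "symmetric_mat T" using T pos_def_def by auto
  define p where "p = real CARD('n)"
  define K where "K = 1 + 2 * (p + norm T) / t + 4 * sqrt p / t"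
  have K: "1 + 2 * (p + norm T) / t \<le> K" "4 * sqrt p / t \<le> K" "1 \<le> K"
    unfolding K_def using t by (auto simp: p_def)
  have bound: "norm (sigma_hat_Ia S T lam) \<le> K * (1 + norm S)"
    if S: "pos_semidef S" and lam: "0 \<le> lam" for S lam
  proof (cases "lam * t \<le> 2 * norm S")
    case True
    have sS: "symmetric_mat S" using S pos_semidef_def by auto
    have lam_le: "lam \<le> 2 * norm S / t" using True t by (simp add: le_divide_eq)
    have y: "0 \<le> lam * p" using lam by (simp add: p_def)
    have "0 \<le> (lam * p + 1/2)\<^sup>2" by simp
    then have "lam * p \<le> (1 + lam * p)\<^sup>2" by (simp add: power2_eq_square algebra_simps)
    then have "sqrt (lam * p) \<le> sqrt ((1 + lam * p)\<^sup>2)" by (rule real_sqrt_le_mono)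
    then have "sqrt (lam * p) \<le> 1 + lam * p" using y by simp
    then have "norm (sigma_hat_Ia S T lam) \<le> 1 + norm S + lam * (p + norm T)"
      using norm_sigma_hat_Ia_le[OF sS sT lam] unfolding p_def by (simp add: algebra_simps)
    also have "\<dots> \<le> 1 + norm S + (2 * norm S / t) * (p + norm T)"
      using lam_le by (intro add_left_mono mult_right_mono) (auto simp: p_def)
    also have "\<dots> = 1 + norm S * (1 + 2 * (p + norm T) / t)" by (simp add: algebra_simps)
    also have "\<dots> \<le> 1 + norm S * K" using K(1) by (intro add_left_mono mult_left_mono) auto
    also have "\<dots> \<le> K * (1 + norm S)" using K(3) by (simp add: algebra_simps)
    finally show ?thesis .
  next
    case False
    then have "norm (sigma_hat_Ia S T lam) \<le> 4 * sqrt p / t"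
      unfolding p_def by (intro norm_sigma_hat_Ia_le_large_lam[OF S sT t]) simp
    also have "\<dots> \<le> K * (1 + norm S)" using K(2,3) by (smt (verit) mult_le_cancel_left1 norm_ge_zero)
    finally show ?thesis .
  qed
  show ?thesis using K(3) by (intro that[of K] bound) auto
qed

lemma norm_square_diff_le:
  "norm ((D::real^'n^'n) ** D - S ** S) \<le> (2 * norm S + norm (D - S)) * norm (D - S)"
proof -
  have "D ** D - S ** S = D ** (D - S) + (D - S) ** S"
    by (simp add: matrix_diff_ldistrib matrix_diff_rdistrib)
  then have "norm (D ** D - S ** S) \<le> norm (D ** (D - S)) + norm ((D - S) ** S)"
    by (simp only: norm_triangle_ineq)
  also have "\<dots> \<le> norm D * norm (D - S) + norm (D - S) * norm S"
    by (intro add_mono norm_matrix_mul_le)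
  also have "\<dots> \<le> (norm S + norm (D - S)) * norm (D - S) + norm (D - S) * norm S"
    using norm_triangle_ineq[of S "D - S"] by (intro add_right_mono mult_right_mono) auto
  finally show ?thesis by (simp add: algebra_simps)
qed

text \<open>Near \<open>(S, lam) = (\<Sigma>, 0)\<close> the matrix \<open>R\<^sup>2\<close> is close to \<open>(\<Sigma>/2)\<^sup>2\<close>, so \<open>R\<close> is close
  to \<open>\<Sigma>/2\<close> by \<open>square_diff_lower_bound\<close>, since \<open>\<Sigma>/2\<close> is bounded below.\<close>
lemma norm_sigma_hat_Ia_diff_le:
  fixes S T Sig :: "real^'n^'n"
  assumes S: "symmetric_mat S" and T: "symmetric_mat T" and lam: "0 \<le> lam"
    and m: "0 < m" "\<And>x. m * (norm x)\<^sup>2 \<le> x \<bullet> (Sig *v x)"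
  defines "D \<equiv> S - lam *\<^sub>R T"
  shows "norm (sigma_hat_Ia S T lam - Sig)
    \<le> (2 / m) * (lam * sqrt (CARD('n)) + norm (D ** D - Sig ** Sig) / 4) + norm (D - Sig) / 2"
proof -
  define R where "R = psd_sqrt (lam *\<^sub>R mat 1 + (1/4) *\<^sub>R (D ** D))"
  note F = sigma_hat_Ia_structure[OF S T lam, folded D_def, folded R_def]
  define H where "H = (1/2) *\<^sub>R Sig"
  have "R ** R - H ** H = lam *\<^sub>R mat 1 + (1/4) *\<^sub>R (D ** D - Sig ** Sig)"
    unfolding F(4) H_def by (simp add: matrix_scalar_ac scalar_matrix_assoc[symmetric] algebra_simps)
  then have "norm (R ** R - H ** H) \<le> lam * sqrt (CARD('n)) + norm (D ** D - Sig ** Sig) / 4"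
    using norm_triangle_ineq[of "lam *\<^sub>R mat 1" "(1/4) *\<^sub>R (D ** D - Sig ** Sig)"] lam
    by (simp add: norm_mat_1)
  moreover have "(m/2) * norm (R - H) \<le> norm (R ** R - H ** H)"
  proof (rule square_diff_lower_bound[OF F(3)])
    show "(m/2) * (norm x)\<^sup>2 \<le> x \<bullet> (H *v x)" for x
      using m(2)[of x] unfolding H_def by (simp add: scaleR_matrix_vector_assoc[symmetric])
  qed (use m in simp)
  ultimately have "norm (R - H) \<le> (2 / m) * (lam * sqrt (CARD('n)) + norm (D ** D - Sig ** Sig) / 4)"
    using m(1) by (simp add: field_simps)
  moreover have "sigma_hat_Ia S T lam - Sig = (R - H) + (1/2) *\<^sub>R (D - Sig)"
    unfolding F(6) H_def by (simp add: vec_eq_iff field_simps)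
  ultimately show ?thesis
    using norm_triangle_ineq[of "R - H" "(1/2) *\<^sub>R (D - Sig)"] by simp
qed

lemma sigma_hat_Ia_local_Lipschitz:
  fixes Sig T :: "real^'n^'n"
  assumes Sig: "pos_def Sig" and T: "symmetric_mat T"
  obtains K where "0 \<le> K"
    "\<And>S lam. symmetric_mat S \<Longrightarrow> 0 \<le> lam \<Longrightarrow> lam \<le> 1 \<Longrightarrow> norm (S - Sig) \<le> 1 \<Longrightarrow>
       norm (sigma_hat_Ia S T lam - Sig) \<le> K * (norm (S - Sig) + lam)"
proof -
  obtain m where m: "m > 0" "\<And>x. m * (norm x)\<^sup>2 \<le> x \<bullet> (Sig *v x)"
    using pos_def_quadratic_form_lower_bound[OF Sig] by blast
  define \<tau> where "\<tau> = 1 + norm T"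
  define C where "C = sqrt (CARD('n)) + (2 * norm Sig + 2 * \<tau>) * \<tau> / 4"
  define K where "K = (2 / m) * C + \<tau> / 2"
  have "0 \<le> \<tau>" "0 \<le> C" unfolding \<tau>_def C_def by auto
  then have "0 \<le> K" unfolding K_def using m(1) by simp
  moreover have "norm (sigma_hat_Ia S T lam - Sig) \<le> K * (norm (S - Sig) + lam)"
    if S: "symmetric_mat S" and lam: "0 \<le> lam" "lam \<le> 1" and close: "norm (S - Sig) \<le> 1" for S lam
  proof -
    define d where "d = norm (S - Sig) + lam"
    have d: "lam \<le> d" "d \<le> 2" unfolding d_def using lam close by auto
    define e where "e = norm (S - lam *\<^sub>R T - Sig)"
    have "e \<le> norm (S - Sig) + lam * norm T" unfolding e_def
      using norm_triangle_ineq4[of "S - Sig" "lam *\<^sub>R T"] lam by (simp add: algebra_simps)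
    also have "\<dots> \<le> \<tau> * d" unfolding \<tau>_def d_def using lam close
      by (simp add: algebra_simps mult_left_le_one_le mult_right_le_one_le)
    finally have e: "e \<le> \<tau> * d" .
    define N where "N = norm ((S - lam *\<^sub>R T) ** (S - lam *\<^sub>R T) - Sig ** Sig)"
    have "N \<le> (2 * norm Sig + e) * e" unfolding N_def e_def by (rule norm_square_diff_le)
    also have "\<dots> \<le> (2 * norm Sig + 2 * \<tau>) * (\<tau> * d)"
    proof -
      have "\<tau> * d \<le> \<tau> * 2" using d \<open>0 \<le> \<tau>\<close> by (intro mult_left_mono)
      then show ?thesis using e \<open>0 \<le> \<tau>\<close> by (intro mult_mono) (auto simp: e_def)
    qed
    finally have N: "N \<le> (2 * norm Sig + 2 * \<tau>) * \<tau> * d" by (simp add: mult_ac)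
    have "lam * sqrt (CARD('n)) \<le> d * sqrt (CARD('n))" using d(1) by (simp add: mult_right_mono)
    moreover have "C * d = d * sqrt (CARD('n)) + (2 * norm Sig + 2 * \<tau>) * \<tau> * d / 4"
      unfolding C_def by (simp add: algebra_simps)
    ultimately have "lam * sqrt (CARD('n)) + N / 4 \<le> C * d" using N by linarith
    then have "(2 / m) * (lam * sqrt (CARD('n)) + N / 4) \<le> (2 / m) * (C * d)"
      using m(1) by (intro mult_left_mono) auto
    then have "norm (sigma_hat_Ia S T lam - Sig) \<le> (2 / m) * (C * d) + (\<tau> * d) / 2"
      using norm_sigma_hat_Ia_diff_le[OF S T lam(1) m] e unfolding N_def e_def by linarith
    also have "\<dots> = K * d" unfolding K_def by (simp add: algebra_simps)
    finally show ?thesis unfolding d_def .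
  qed
  ultimately show ?thesis using that by blast
qed

lemma borel_measurable_sigma_hat_Ia:
  fixes S :: "'a \<Rightarrow> real^'n^'n"
  assumes S: "S \<in> borel_measurable M" and lam: "lam \<in> borel_measurable M"
    and sym: "\<And>x. x \<in> space M \<Longrightarrow> symmetric_mat (S x)" and nonneg: "\<And>x. x \<in> space M \<Longrightarrow> 0 \<le> lam x"
    and T: "symmetric_mat T"
  shows "(\<lambda>x. sigma_hat_Ia (S x) T (lam x)) \<in> borel_measurable M"
proof -
  define D where "D x = S x - lam x *\<^sub>R T" for x
  have D: "D \<in> borel_measurable M" unfolding D_def using S lam by measurable
  define H where "H x = lam x *\<^sub>R mat 1 + (1/4) *\<^sub>R (D x ** D x)" for x
  have "(\<lambda>x. D x ** D x) \<in> borel_measurable M"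
    by (rule borel_measurable_continuous_Pair[OF D D]) (intro continuous_intros)
  then have "H \<in> borel_measurable M" unfolding H_def using lam by measurable
  then have "(\<lambda>x. psd_sqrt (H x)) \<in> borel_measurable M"
    by (rule borel_measurable_psd_sqrt)
       (use sigma_hat_Ia_structure(2)[OF sym T nonneg] in \<open>simp add: H_def D_def\<close>)
  then have "(\<lambda>x. psd_sqrt (H x) + (1/2) *\<^sub>R D x) \<in> borel_measurable M" using D by measurable
  then show ?thesis unfolding sigma_hat_Ia_def Let_def H_def D_def .
qed

lemma sigma_hat_Ia_square_error_bounds:
  fixes Sig T :: "real^'n^'n"
  assumes Sig: "pos_def Sig" and T: "pos_def T"
  obtains C where "0 \<le> C"
    "\<And>S lam. pos_semidef S \<Longrightarrow> 0 \<le> lam \<Longrightarrow>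
       (norm (sigma_hat_Ia S T lam - Sig))\<^sup>2 \<le> C * (1 + (norm (S - Sig))\<^sup>2)"
    "\<And>S lam. symmetric_mat S \<Longrightarrow> 0 \<le> lam \<Longrightarrow> (norm (S - Sig))\<^sup>2 \<le> 1 \<Longrightarrow> lam \<le> 1 \<Longrightarrow>
       (norm (sigma_hat_Ia S T lam - Sig))\<^sup>2 \<le> C * ((norm (S - Sig))\<^sup>2 + lam\<^sup>2)"
proof -
  have sT: "symmetric_mat T" using T pos_def_def by auto
  obtain K where K: "0 \<le> K"
    "\<And>S lam. pos_semidef S \<Longrightarrow> 0 \<le> lam \<Longrightarrow> norm (sigma_hat_Ia S T lam) \<le> K * (1 + norm S)"
    using sigma_hat_Ia_linear_growth[OF T] by blast
  obtain L where L: "0 \<le> L"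
    "\<And>S lam. symmetric_mat S \<Longrightarrow> 0 \<le> lam \<Longrightarrow> lam \<le> 1 \<Longrightarrow> norm (S - Sig) \<le> 1 \<Longrightarrow>
       norm (sigma_hat_Ia S T lam - Sig) \<le> L * (norm (S - Sig) + lam)"
    using sigma_hat_Ia_local_Lipschitz[OF Sig sT] by blast
  define A where "A = K * (1 + norm Sig) + norm Sig"
  define C where "C = max (2 * A\<^sup>2 + 2 * K\<^sup>2) (2 * L\<^sup>2)"
  have growth: "(norm (sigma_hat_Ia S T lam - Sig))\<^sup>2 \<le> C * (1 + (norm (S - Sig))\<^sup>2)"
    if "pos_semidef S" "0 \<le> lam" for S lam
  proof -
    define r where "r = norm (S - Sig)"
    have "norm S \<le> norm Sig + r" unfolding r_def using norm_triangle_ineq[of Sig "S - Sig"] by simp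
    then have "norm (sigma_hat_Ia S T lam) \<le> K * (1 + norm Sig + r)"
      using K(2)[OF that] K(1) by (smt (verit) mult_left_mono)
    then have "norm (sigma_hat_Ia S T lam - Sig) \<le> A + K * r"
      unfolding A_def using norm_triangle_ineq4[of "sigma_hat_Ia S T lam" Sig] by (simp add: algebra_simps)
    then have "(norm (sigma_hat_Ia S T lam - Sig))\<^sup>2 \<le> (A + K * r)\<^sup>2" by (simp add: power_mono)
    also have "\<dots> \<le> 2 * A\<^sup>2 + 2 * K\<^sup>2 * r\<^sup>2"
      using zero_le_power2[of "A - K * r"] by (simp add: power2_eq_square algebra_simps)
    also have "\<dots> \<le> (2 * A\<^sup>2 + 2 * K\<^sup>2) * (1 + r\<^sup>2)" by (simp add: algebra_simps)
    also have "\<dots> \<le> C * (1 + r\<^sup>2)" unfolding C_def by (intro mult_right_mono) auto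
    finally show ?thesis unfolding r_def .
  qed
  have local: "(norm (sigma_hat_Ia S T lam - Sig))\<^sup>2 \<le> C * ((norm (S - Sig))\<^sup>2 + lam\<^sup>2)"
    if "symmetric_mat S" "0 \<le> lam" "(norm (S - Sig))\<^sup>2 \<le> 1" "lam \<le> 1" for S lam
  proof -
    have "norm (S - Sig) \<le> 1" using that(3) by (simp add: power_le_one_iff)
    then have "norm (sigma_hat_Ia S T lam - Sig) \<le> L * (norm (S - Sig) + lam)"
      using L(2) that by blast
    then have "(norm (sigma_hat_Ia S T lam - Sig))\<^sup>2 \<le> (L * (norm (S - Sig) + lam))\<^sup>2"
      by (simp add: power_mono)
    also have "\<dots> = L\<^sup>2 * (norm (S - Sig) + lam)\<^sup>2" by (simp add: power_mult_distrib)
    also have "\<dots> \<le> L\<^sup>2 * (2 * ((norm (S - Sig))\<^sup>2 + lam\<^sup>2))"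
      using zero_le_power2[of "norm (S - Sig) - lam"]
      by (intro mult_left_mono) (simp_all add: power2_eq_square algebra_simps)
    also have "\<dots> = (2 * L\<^sup>2) * ((norm (S - Sig))\<^sup>2 + lam\<^sup>2)" by simp
    also have "\<dots> \<le> C * ((norm (S - Sig))\<^sup>2 + lam\<^sup>2)" unfolding C_def by (intro mult_right_mono) auto
    finally show ?thesis .
  qed
  have "0 \<le> C" unfolding C_def by (simp add: le_max_iff_disj)
  then show ?thesis using that growth local by blast
qed

section \<open>Continuity and measurability of the matrix inverse\<close>

lemma
  assumes "invertible (A::real^'n^'n)"
  shows matrix_inv_right: "A ** matrix_inv A = mat 1"
    and matrix_inv_left: "matrix_inv A ** A = mat 1"
  using someI_ex[OF assms[unfolded invertible_def]] unfolding matrix_inv_def by blast+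

lemma symmetric_matrix_inv:
  assumes "symmetric_mat (A::real^'n^'n)" "invertible A"
  shows "symmetric_mat (matrix_inv A)"
proof -
  define Q where "Q = matrix_inv A"
  have AQ: "A ** Q = mat 1" unfolding Q_def by (rule matrix_inv_right[OF assms(2)])
  have "transpose Q ** A = mat 1"
    using arg_cong[OF AQ, of transpose] assms(1) by (simp add: matrix_transpose_mul symmetric_mat_def)
  then have "transpose Q = Q" using AQ by (metis matrix_mul_assoc matrix_mul_lid matrix_mul_rid)
  then show ?thesis unfolding Q_def symmetric_mat_def .
qed

definition cramer_inv :: "real^'n^'n \<Rightarrow> real^'n^'n" where
  "cramer_inv A = (\<chi> i k. det (\<chi> r c. if c = i then (if r = k then 1 else 0) else A$r$c) / det A)"

lemma matrix_inv_eq_cramer_inv: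
  assumes "det (A::real^'n^'n) \<noteq> 0"
  shows "matrix_inv A = cramer_inv A"
proof -
  have inv: "invertible A" using assms invertible_det_nz by blast
  have "matrix_inv A $ i $ k = cramer_inv A $ i $ k" for i k
  proof -
    have "A *v (matrix_inv A *v axis k 1) = axis k 1"
      by (simp add: matrix_vector_mul_assoc matrix_inv_right[OF inv])
    then have "matrix_inv A *v axis k 1 = (\<chi> j. det (\<chi> r c. if c = j then axis k 1 $ r else A $ r $ c) / det A)"
      using cramer[OF assms] by blast
    moreover have "(matrix_inv A *v axis k 1) $ i = matrix_inv A $ i $ k"
      by (simp add: matrix_vector_mult_basis column_def)
    moreover have "(\<chi> r c. if c = i then axis k 1 $ r else A $ r $ c)
        = (\<chi> r c. if c = i then (if r = k then 1 else 0) else A$r$c)"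
      by (simp add: axis_def vec_eq_iff)
    ultimately show ?thesis unfolding cramer_inv_def by simp
  qed
  then show ?thesis by (simp add: vec_eq_iff)
qed

lemma continuous_on_det: "continuous_on S (\<lambda>A::real^'n^'n. det A)"
  unfolding det_def by (intro continuous_intros)

lemma continuous_on_cramer_inv: "continuous_on {A::real^'n^'n. det A \<noteq> 0} cramer_inv"
  unfolding cramer_inv_def
proof (intro continuous_on_vec_lambda continuous_on_divide)
  fix i k :: 'n
  have "continuous_on S (\<lambda>A::real^'n^'n. if c = i then e else A$r$c)" for S r c and e :: real
    by (cases "c = i") (auto intro!: continuous_intros)
  then have "continuous_on S (\<lambda>A::real^'n^'n. \<chi> r c. if c = i then (if r = k then 1 else 0) else A$r$c)" for S
    by (intro continuous_on_vec_lambda)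
  then show "continuous_on {A::real^'n^'n. det A \<noteq> 0}
      (\<lambda>A. det (\<chi> r c. if c = i then if r = k then 1 else 0 else A $ r $ c))"
    by (rule continuous_on_compose2[OF continuous_on_det]) auto
qed (auto intro: continuous_on_det)

lemma isCont_matrix_inv:
  assumes "det (A::real^'n^'n) \<noteq> 0"
  shows "isCont matrix_inv A"
proof -
  have "open {A::real^'n^'n. det A \<noteq> 0}"
    by (intro open_Collect_neq continuous_on_det continuous_on_const)
  moreover have "continuous_on {A::real^'n^'n. det A \<noteq> 0} matrix_inv"
    using continuous_on_cramer_inv
    by (rule continuous_on_cong[THEN iffD1, rotated 2]) (auto simp: matrix_inv_eq_cramer_inv)
  ultimately show ?thesis using continuous_on_interior[of _ matrix_inv A] assms
    by (simp add: interior_open)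
qed

text \<open>Off the invertible matrices \<open>matrix_inv\<close> is the constant \<open>SOME A. False\<close>.\<close>
lemma borel_measurable_matrix_inv: "(matrix_inv :: real^'n^'n \<Rightarrow> real^'n^'n) \<in> borel_measurable borel"
proof -
  have singular: "matrix_inv A = (SOME A'::real^'n^'n. False)" if "det A = 0" for A :: "real^'n^'n"
  proof -
    have "(\<lambda>A'. A ** A' = mat 1 \<and> A' ** A = mat 1) = (\<lambda>A'. False)"
      using that invertible_det_nz unfolding invertible_def by auto
    then show ?thesis unfolding matrix_inv_def by simp
  qed
  have "matrix_inv = (\<lambda>A::real^'n^'n. if A \<in> {A. det A = 0} then (SOME A'. False) else cramer_inv A)"
    using singular matrix_inv_eq_cramer_inv by fastforce
  also have "\<dots> \<in> borel_measurable borel"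
  proof (rule borel_measurable_continuous_on_if)
    show "{A::real^'n^'n. det A = 0} \<in> sets borel"
      by (intro borel_closed closed_Collect_eq continuous_on_det continuous_on_const)
    show "continuous_on (- {A::real^'n^'n. det A = 0}) cramer_inv"
      using continuous_on_cramer_inv by (simp add: Compl_eq set_eq_iff)
  qed (rule continuous_on_const)
  finally show ?thesis .
qed

section \<open>Moments of the multivariate normal distribution\<close>

lemma power2_le_exp_abs: "x\<^sup>2 \<le> 4 * exp \<bar>x::real\<bar>"
proof -
  have "\<bar>x\<bar> / 2 \<le> exp (\<bar>x\<bar> / 2)" using exp_ge_add_one_self[of "\<bar>x\<bar> / 2"] by linarith
  then have "(\<bar>x\<bar> / 2)\<^sup>2 \<le> (exp (\<bar>x\<bar> / 2))\<^sup>2" by (intro power_mono) auto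
  also have "(exp (\<bar>x\<bar> / 2))\<^sup>2 = exp \<bar>x\<bar>" by (simp add: power2_eq_square exp_add[symmetric])
  finally show ?thesis by (simp add: power_divide)
qed

lemma exp_abs_le: "exp \<bar>x::real\<bar> \<le> exp x + exp (- x)"
  by (cases "x \<ge> 0") (auto simp: add_increasing add_increasing2)

lemma exp_second_difference_bounds:
  fixes x m :: real
  assumes m: "1 \<le> m"
  shows "0 \<le> m\<^sup>2 * (exp (x / m) + exp (- x / m) - 2)"
    "m\<^sup>2 * (exp (x / m) + exp (- x / m) - 2) \<le> x\<^sup>2 * exp \<bar>x\<bar>"
proof -
  have "1 + x/m \<le> exp (x/m)" "1 + (-x/m) \<le> exp (-x/m)" using exp_ge_add_one_self by blast+
  then have "0 \<le> exp (x / m) + exp (- x / m) - 2" by linarith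
  then show "0 \<le> m\<^sup>2 * (exp (x / m) + exp (- x / m) - 2)" by simp
  have taylor: "exp y - 1 - y \<le> exp \<bar>y\<bar> * y\<^sup>2 / 2" for y :: real
  proof -
    obtain t where t: "\<bar>t\<bar> \<le> \<bar>y\<bar>" "exp y = (\<Sum>m<2. y ^ m / fact m) + exp t / fact 2 * y ^ 2"
      using Maclaurin_exp_le[of y 2] by blast
    then have "exp y - 1 - y = exp t / 2 * y\<^sup>2" by (simp add: eval_nat_numeral)
    also have "\<dots> \<le> exp \<bar>y\<bar> / 2 * y\<^sup>2" using t(1) by (intro mult_right_mono) auto
    finally show ?thesis by simp
  qed
  have "exp (x / m) + exp (- x / m) - 2 \<le> exp \<bar>x/m\<bar> * (x/m)\<^sup>2"
    using taylor[of "x/m"] taylor[of "-x/m"] by simp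
  also have "\<dots> \<le> exp \<bar>x\<bar> * (x/m)\<^sup>2"
  proof -
    have "\<bar>x/m\<bar> \<le> \<bar>x\<bar>"
      using m by (simp add: abs_divide divide_le_eq_1 mult_le_cancel_left1 abs_mult divide_le_eq)
    then show ?thesis by (intro mult_right_mono) auto
  qed
  finally have "m\<^sup>2 * (exp (x / m) + exp (- x / m) - 2) \<le> m\<^sup>2 * (exp \<bar>x\<bar> * (x/m)\<^sup>2)"
    by (intro mult_left_mono) auto
  also have "\<dots> = x\<^sup>2 * exp \<bar>x\<bar>" using m by (simp add: power_divide)
  finally show "m\<^sup>2 * (exp (x / m) + exp (- x / m) - 2) \<le> x\<^sup>2 * exp \<bar>x\<bar>" .
qed

lemma integrable_power2_mult_exp_abs:
  fixes Z :: "'a \<Rightarrow> real"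
  assumes Z: "Z \<in> borel_measurable M" and exp: "\<And>a. integrable M (\<lambda>x. exp (a * Z x))"
  shows "integrable M (\<lambda>x. (Z x)\<^sup>2 * exp \<bar>Z x\<bar>)"
proof (rule Bochner_Integration.integrable_bound)
  show "integrable M (\<lambda>x. 4 * (exp (2 * Z x) + exp (-2 * Z x)))"
    by (intro integrable_mult_right Bochner_Integration.integrable_add exp)
  show "(\<lambda>x. (Z x)\<^sup>2 * exp \<bar>Z x\<bar>) \<in> borel_measurable M" using Z by measurable
  show "AE x in M. norm ((Z x)\<^sup>2 * exp \<bar>Z x\<bar>) \<le> norm (4 * (exp (2 * Z x) + exp (-2 * Z x)))"
  proof (rule AE_I2)
    fix x
    have "(Z x)\<^sup>2 * exp \<bar>Z x\<bar> \<le> (4 * exp \<bar>Z x\<bar>) * exp \<bar>Z x\<bar>"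
      by (intro mult_right_mono power2_le_exp_abs) auto
    also have "\<dots> = 4 * exp \<bar>2 * Z x\<bar>" by (simp add: exp_add[symmetric] abs_mult)
    also have "\<dots> \<le> 4 * (exp (2 * Z x) + exp (-2 * Z x))" using exp_abs_le[of "2 * Z x"] by simp
    finally show "norm ((Z x)\<^sup>2 * exp \<bar>Z x\<bar>) \<le> norm (4 * (exp (2 * Z x) + exp (-2 * Z x)))"
      by (simp add: add_nonneg_nonneg)
  qed
qed

lemma integrable_moments_of_integrable_exp:
  fixes Z :: "'a \<Rightarrow> real"
  assumes Z: "Z \<in> borel_measurable M" and exp: "\<And>a. integrable M (\<lambda>x. exp (a * Z x))"
  shows "integrable M (\<lambda>x. (Z x)\<^sup>2)" "integrable M (\<lambda>x. (Z x)^4)"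
proof -
  note W = integrable_power2_mult_exp_abs[OF Z exp]
  show "integrable M (\<lambda>x. (Z x)\<^sup>2)"
    using Z by (intro Bochner_Integration.integrable_bound[OF W] AE_I2) (auto simp: mult_le_cancel_left1)
  show "integrable M (\<lambda>x. (Z x)^4)"
  proof (rule Bochner_Integration.integrable_bound[OF integrable_mult_right[OF W, of 4]])
    show "AE x in M. norm ((Z x)^4) \<le> norm (4 * ((Z x)\<^sup>2 * exp \<bar>Z x\<bar>))"
    proof (rule AE_I2)
      fix x
      have "(Z x)^4 = (Z x)\<^sup>2 * (Z x)\<^sup>2" by (simp add: power2_eq_square power4_eq_xxxx)
      also have "\<dots> \<le> (Z x)\<^sup>2 * (4 * exp \<bar>Z x\<bar>)" by (intro mult_left_mono power2_le_exp_abs) auto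
      finally show "norm ((Z x)^4) \<le> norm (4 * ((Z x)\<^sup>2 * exp \<bar>Z x\<bar>))" by (simp add: mult_ac)
    qed
  qed (use Z in measurable)
qed

text \<open>The second moment is recovered from the moment generating function as the limit of the
  second differences \<open>m\<^sup>2 (E exp (Z/m) + E exp (-Z/m) - 2)\<close>, by dominated convergence.\<close>
lemma gaussian_mgf_moments:
  fixes Z :: "'a \<Rightarrow> real"
  assumes P: "prob_space P" and Z: "Z \<in> borel_measurable P"
    and mgf: "\<And>a. (\<integral>\<^sup>+x. ennreal (exp (a * Z x)) \<partial>P) = ennreal (exp (a\<^sup>2 * c / 2))"
  shows "integrable P (\<lambda>x. (Z x)\<^sup>2)" "(\<integral>x. (Z x)\<^sup>2 \<partial>P) = c" "integrable P (\<lambda>x. (Z x)^4)"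
proof -
  have exp: "integrable P (\<lambda>x. exp (a * Z x))" for a
    by (rule integrableI_nn_integral_finite[OF _ _ mgf]) (use Z in auto)
  have exp_integral: "(\<integral>x. exp (a * Z x) \<partial>P) = exp (a\<^sup>2 * c / 2)" for a
    using nn_integral_eq_integral[OF exp, of a] mgf[of a] by (simp add: integral_nonneg_AE)
  note W = integrable_power2_mult_exp_abs[OF Z exp]
  show "integrable P (\<lambda>x. (Z x)\<^sup>2)" "integrable P (\<lambda>x. (Z x)^4)"
    using integrable_moments_of_integrable_exp[OF Z exp] by blast+
  define s where "s m x = (real (Suc m))\<^sup>2 * (exp (Z x / real (Suc m)) + exp (- Z x / real (Suc m)) - 2)"
    for m x
  have "(\<lambda>m. \<integral>x. s m x \<partial>P) \<longlonglongrightarrow> (\<integral>x. (Z x)\<^sup>2 \<partial>P)"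
  proof (rule integral_dominated_convergence[OF _ _ W])
    show "AE x in P. (\<lambda>m. s m x) \<longlonglongrightarrow> (Z x)\<^sup>2"
      unfolding s_def by (intro AE_I2) (real_asymp; simp add: power2_eq_square)
    show "AE x in P. norm (s m x) \<le> (Z x)\<^sup>2 * exp \<bar>Z x\<bar>" for m
      using exp_second_difference_bounds[of "real (Suc m)"] unfolding s_def by simp
  qed (use Z in \<open>auto simp: s_def\<close>)
  moreover have "(\<integral>x. s m x \<partial>P) = (real (Suc m))\<^sup>2 * (2 * exp (c / (2 * (real (Suc m))\<^sup>2)) - 2)" for m
  proof -
    define r where "r = real (Suc m)"
    have "r \<noteq> 0" unfolding r_def by simp
    then have mgf_r: "(\<integral>x. exp (Z x / r) \<partial>P) = exp (c / (2 * r\<^sup>2))"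
        "(\<integral>x. exp (- Z x / r) \<partial>P) = exp (c / (2 * r\<^sup>2))"
      using exp_integral[of "1/r"] exp_integral[of "-1/r"] by (simp_all add: power_divide field_simps)
    have "integrable P (\<lambda>x. exp (Z x / r))" "integrable P (\<lambda>x. exp (- Z x / r))"
      using exp[of "1/r"] exp[of "-1/r"] by simp_all
    moreover have "integrable P (\<lambda>x. 2::real)"
      using P finite_measure.integrable_const unfolding prob_space_def by blast
    ultimately have "(\<integral>x. exp (Z x / r) + exp (- Z x / r) - 2 \<partial>P)
        = (\<integral>x. exp (Z x / r) \<partial>P) + (\<integral>x. exp (- Z x / r) \<partial>P) - 2"
      using prob_space.prob_space[OF P]
      by (simp add: Bochner_Integration.integral_diff Bochner_Integration.integral_add)
    then show ?thesis unfolding s_def r_def[symmetric] mgf_r by simp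
  qed
  moreover have "(\<lambda>m. (real (Suc m))\<^sup>2 * (2 * exp (c / (2 * (real (Suc m))\<^sup>2)) - 2)) \<longlonglongrightarrow> c"
    by real_asymp
  ultimately show "(\<integral>x. (Z x)\<^sup>2 \<partial>P) = c" using LIMSEQ_unique by auto
qed

lemma borel_measurable_mvn_density[measurable]:
  fixes Sig :: "real^'n^'n"
  shows "mvn_density Sig \<in> borel_measurable borel"
proof -
  have "continuous_on UNIV (\<lambda>x::real^'n. exp (- (x \<bullet> (matrix_inv Sig *v x)) / 2))"
    by (intro continuous_intros continuous_on_quadratic_form) auto
  then have "(\<lambda>x::real^'n. exp (- (x \<bullet> (matrix_inv Sig *v x)) / 2)) \<in> borel_measurable borel"
    by (rule borel_measurable_continuous_onI)
  then show ?thesis unfolding mvn_density_def[abs_def] by measurable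
qed

text \<open>Completing the square in the exponent.\<close>
lemma mvn_density_shift:
  fixes Sig :: "real^'n^'n"
  assumes Sig: "pos_def Sig"
  shows "mvn_density Sig ((-a) *\<^sub>R (Sig *v w) + x)
    = exp (- (a\<^sup>2 * (w \<bullet> (Sig *v w))) / 2) * (mvn_density Sig x * exp (a * (w \<bullet> x)))"
proof -
  define Q where "Q = matrix_inv Sig"
  have sS: "symmetric_mat Sig" using Sig pos_def_def by auto
  have inv: "invertible Sig" by (rule pos_def_invertible[OF Sig])
  have SQ: "Sig ** Q = mat 1" and QS: "Q ** Sig = mat 1"
    unfolding Q_def using matrix_inv_right[OF inv] matrix_inv_left[OF inv] by auto
  have sQ: "symmetric_mat Q" unfolding Q_def by (rule symmetric_matrix_inv[OF sS inv])
  define c where "c = w \<bullet> (Sig *v w)"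
  define v where "v = (-a) *\<^sub>R (Sig *v w)"
  have q: "(v + x) \<bullet> (Q *v (v + x)) = x \<bullet> (Q *v x) - 2 * (a * (w \<bullet> x)) + a\<^sup>2 * c"
  proof -
    have "(Sig *v w) \<bullet> (Q *v x) = w \<bullet> (Sig *v (Q *v x))" using symmetric_mat_inner[OF sS, of w "Q *v x"] by simp
    also have "\<dots> = w \<bullet> x" by (simp add: matrix_vector_mul_assoc SQ)
    finally have vQx: "v \<bullet> (Q *v x) = - a * (w \<bullet> x)" unfolding v_def by simp
    have xQv: "x \<bullet> (Q *v v) = v \<bullet> (Q *v x)"
      using symmetric_mat_inner[OF sQ, of x v] by (simp add: inner_commute)
    have "Q *v (Sig *v w) = w" by (simp add: matrix_vector_mul_assoc QS)
    then have vQv: "v \<bullet> (Q *v v) = a\<^sup>2 * c" unfolding v_def c_def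
      by (simp add: matrix_vector_mult_scaleR power2_eq_square inner_commute
          bounded_bilinear.minus_right[OF bounded_bilinear_matrix_vector_mul])
    show ?thesis using vQx xQv vQv by (simp add: matrix_vector_right_distrib inner_add_left inner_add_right)
  qed
  have "- (X - 2 * t + r) / 2 = - X / 2 + t + - r / 2" for X t r :: real by simp
  then have exponent:
    "- ((v + x) \<bullet> (Q *v (v + x))) / 2 = - (x \<bullet> (Q *v x)) / 2 + a * (w \<bullet> x) + - (a\<^sup>2 * c) / 2"
    unfolding q .
  have "exp (- ((v + x) \<bullet> (Q *v (v + x))) / 2)
      = exp (- (x \<bullet> (Q *v x)) / 2) * exp (a * (w \<bullet> x)) * exp (- (a\<^sup>2 * c) / 2)"
    unfolding exponent exp_add ..
  then show ?thesis unfolding mvn_density_def Q_def[symmetric] v_def[symmetric] c_def[symmetric]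
    by (simp add: mult_ac)
qed

text \<open>Lebesgue measure is translation invariant, and the total mass of the density is 1.\<close>
lemma mvn_mgf:
  fixes Sig :: "real^'n^'n"
  assumes Sig: "pos_def Sig" and total: "(\<integral>\<^sup>+x. ennreal (mvn_density Sig x) \<partial>lborel) = 1"
  shows "(\<integral>\<^sup>+x. ennreal (mvn_density Sig x) * ennreal (exp (a * (w \<bullet> x))) \<partial>lborel)
           = ennreal (exp (a\<^sup>2 * (w \<bullet> (Sig *v w)) / 2))"
proof -
  define c where "c = w \<bullet> (Sig *v w)"
  define v where "v = (-a) *\<^sub>R (Sig *v w)"
  define Z0 where "Z0 = sqrt ((2 * pi) ^ CARD('n) * det Sig)"
  have phi: "mvn_density Sig y = exp (- (y \<bullet> (matrix_inv Sig *v y)) / 2) / Z0" for y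
    unfolding mvn_density_def Z0_def ..
  have "Z0 > 0"
  proof (rule ccontr)
    assume "\<not> Z0 > 0"
    then have "(\<lambda>x. ennreal (mvn_density Sig x)) = (\<lambda>x. 0)"
      unfolding phi by (simp add: divide_nonneg_nonpos ennreal_neg)
    then show False using total by simp
  qed
  then have nonneg: "0 \<le> mvn_density Sig x" for x unfolding phi by simp
  note shift = mvn_density_shift[OF Sig, of a w, folded v_def c_def]
  have "1 = (\<integral>\<^sup>+x. ennreal (mvn_density Sig x) \<partial>distr lborel borel ((+) v))"
    unfolding lborel_distr_plus by (rule total[symmetric])
  also have "\<dots> = (\<integral>\<^sup>+x. ennreal (mvn_density Sig (v + x)) \<partial>lborel)"
    by (intro nn_integral_distr) auto
  also have "\<dots> = (\<integral>\<^sup>+x. ennreal (exp (- (a\<^sup>2 * c) / 2))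
      * (ennreal (mvn_density Sig x) * ennreal (exp (a * (w \<bullet> x)))) \<partial>lborel)"
  proof (rule nn_integral_cong)
    fix x
    show "ennreal (mvn_density Sig (v + x))
        = ennreal (exp (- (a\<^sup>2 * c) / 2)) * (ennreal (mvn_density Sig x) * ennreal (exp (a * (w \<bullet> x))))"
      unfolding shift using nonneg[of x] by (simp add: ennreal_mult'[symmetric])
  qed
  also have "\<dots> = ennreal (exp (- (a\<^sup>2 * c) / 2))
      * (\<integral>\<^sup>+x. ennreal (mvn_density Sig x) * ennreal (exp (a * (w \<bullet> x))) \<partial>lborel)"
    by (rule nn_integral_cmult) measurable
  finally have "ennreal (exp (a\<^sup>2 * c / 2)) * 1 = ennreal (exp (a\<^sup>2 * c / 2)) * ennreal (exp (- (a\<^sup>2 * c) / 2))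
      * (\<integral>\<^sup>+x. ennreal (mvn_density Sig x) * ennreal (exp (a * (w \<bullet> x))) \<partial>lborel)"
    by (simp add: mult.assoc)
  also have "ennreal (exp (a\<^sup>2 * c / 2)) * ennreal (exp (- (a\<^sup>2 * c) / 2)) = 1"
    by (simp add: ennreal_mult'[symmetric] exp_add[symmetric])
  finally show ?thesis unfolding c_def by simp
qed

lemma borel_measurable_vec_nth[measurable (raw)]:
  "f \<in> borel_measurable M \<Longrightarrow> (\<lambda>x. (f x :: 'b::real_normed_vector^'n) $ i) \<in> borel_measurable M"
  by (rule borel_measurable_continuous_on[of "\<lambda>v. v $ i"]) (auto intro: continuous_intros)

text \<open>Moments of \<open>X\<^sub>j X\<^sub>k\<close> follow from those of \<open>(e\<^sub>j \<plusminus> e\<^sub>k) \<bullet> X\<close> by polarization.\<close>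
lemma mvn_product_moments:
  fixes X :: "'a \<Rightarrow> real^'n" and Sig :: "real^'n^'n"
  assumes M: "prob_space M" and Sig: "pos_def Sig"
    and X: "distributed M lborel X (\<lambda>x. ennreal (mvn_density Sig x))"
  shows "integrable M (\<lambda>\<omega>. X \<omega> $ j * X \<omega> $ k)" "(\<integral>\<omega>. X \<omega> $ j * X \<omega> $ k \<partial>M) = Sig $ j $ k"
    "integrable M (\<lambda>\<omega>. (X \<omega> $ j * X \<omega> $ k)\<^sup>2)"
proof -
  have Xm: "X \<in> borel_measurable M" using distributed_measurable[OF X] by (simp add: measurable_lborel2)
  have total: "(\<integral>\<^sup>+x. ennreal (mvn_density Sig x) \<partial>lborel) = 1"
  proof -
    have "(\<integral>\<^sup>+x. ennreal (mvn_density Sig x) * 1 \<partial>lborel) = (\<integral>\<^sup>+x. 1 \<partial>M)"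
      by (rule distributed_nn_integral[OF X]) simp
    then show ?thesis using prob_space.emeasure_space_1[OF M] by simp
  qed
  have moments: "integrable M (\<lambda>\<omega>. (v \<bullet> X \<omega>)\<^sup>2) \<and> (\<integral>\<omega>. (v \<bullet> X \<omega>)\<^sup>2 \<partial>M) = v \<bullet> (Sig *v v)
      \<and> integrable M (\<lambda>\<omega>. (v \<bullet> X \<omega>)^4)" for v
  proof -
    have "(\<integral>\<^sup>+\<omega>. ennreal (exp (a * (v \<bullet> X \<omega>))) \<partial>M) = ennreal (exp (a\<^sup>2 * (v \<bullet> (Sig *v v)) / 2))" for a
      using distributed_nn_integral[OF X, of "\<lambda>x. ennreal (exp (a * (v \<bullet> x)))"] mvn_mgf[OF Sig total, of a v]
      by simp
    moreover have "(\<lambda>\<omega>. v \<bullet> X \<omega>) \<in> borel_measurable M" using Xm by measurable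
    ultimately show ?thesis using gaussian_mgf_moments[OF M] by blast
  qed
  define ep where "ep = axis j 1 + axis k (1::real)"
  define em where "em = axis j 1 - axis k (1::real)"
  have prod: "X \<omega> $ j * X \<omega> $ k = ((ep \<bullet> X \<omega>)\<^sup>2 - (em \<bullet> X \<omega>)\<^sup>2) / 4" for \<omega>
    unfolding ep_def em_def by (simp add: inner_add_left inner_diff_left inner_axis' power2_eq_square algebra_simps)
  have "Sig $ k $ j = Sig $ j $ k" using Sig unfolding pos_def_def symmetric_mat_iff by simp
  then have polar: "ep \<bullet> (Sig *v ep) - em \<bullet> (Sig *v em) = 4 * Sig $ j $ k"
    unfolding ep_def em_def
    by (simp add: matrix_vector_right_distrib matrix_vector_mult_diff_distrib inner_add_left inner_add_right
        inner_diff_left inner_diff_right inner_axis' matrix_vector_mult_basis column_def)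
  note mp = moments[of ep] and mm = moments[of em]
  show "integrable M (\<lambda>\<omega>. X \<omega> $ j * X \<omega> $ k)"
    unfolding prod using mp mm by (intro integrable_divide Bochner_Integration.integrable_diff) auto
  show "(\<integral>\<omega>. X \<omega> $ j * X \<omega> $ k \<partial>M) = Sig $ j $ k"
    unfolding prod using mp mm polar by (simp add: Bochner_Integration.integral_diff)
  have fourth: "integrable M (\<lambda>\<omega>. (X \<omega> $ i)^4)" for i
    using moments[of "axis i 1"] by (simp add: inner_axis')
  show "integrable M (\<lambda>\<omega>. (X \<omega> $ j * X \<omega> $ k)\<^sup>2)"
  proof (rule Bochner_Integration.integrable_bound[of _ "\<lambda>\<omega>. (X \<omega> $ j)^4 + (X \<omega> $ k)^4"])
    show "AE \<omega> in M. norm ((X \<omega> $ j * X \<omega> $ k)\<^sup>2) \<le> norm ((X \<omega> $ j)^4 + (X \<omega> $ k)^4)"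
    proof (rule AE_I2)
      fix \<omega>
      define a b where "a = X \<omega> $ j" and "b = X \<omega> $ k"
      have "0 \<le> (a\<^sup>2 - b\<^sup>2)\<^sup>2" "0 \<le> (a * b)\<^sup>2" by simp_all
      then have "(a * b)\<^sup>2 \<le> a^4 + b^4" by (simp add: power2_eq_square power4_eq_xxxx algebra_simps)
      also have "\<dots> \<le> norm (a^4 + b^4)" by simp
      finally show "norm ((X \<omega> $ j * X \<omega> $ k)\<^sup>2) \<le> norm ((X \<omega> $ j)^4 + (X \<omega> $ k)^4)"
        unfolding a_def b_def by simp
    qed
    show "(\<lambda>\<omega>. (X \<omega> $ j * X \<omega> $ k)\<^sup>2) \<in> borel_measurable M" using Xm by measurable
  qed (use fourth in auto)
qed

lemma sample_cov_entry: "sample_cov Y n \<omega> $ j $ k = (1 / real n) * (\<Sum>i<n. Y i \<omega> $ j * Y i \<omega> $ k)"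
  unfolding sample_cov_def outer_def by (simp add: sum_component)

lemma pos_semidef_sample_cov: "pos_semidef (sample_cov Y n \<omega> :: real^'n^'n)"
  unfolding pos_semidef_def
proof (intro conjI allI)
  show "symmetric_mat (sample_cov Y n \<omega>)"
    unfolding symmetric_mat_iff sample_cov_entry by (simp add: mult.commute)
  fix x :: "real^'n"
  have "outer y *v x = (y \<bullet> x) *\<^sub>R y" for y :: "real^'n"
    by (simp add: outer_def matrix_vector_mult_def vec_eq_iff inner_vec_def sum_distrib_left mult_ac)
  then have "x \<bullet> (sample_cov Y n \<omega> *v x) = (1 / real n) * (\<Sum>i<n. (Y i \<omega> \<bullet> x)\<^sup>2)"
    unfolding sample_cov_def
    by (simp add: scaleR_matrix_vector_assoc[symmetric] bounded_bilinear.sum_left[OF bounded_bilinear_matrix_vector_mul]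
        inner_sum_right power2_eq_square inner_commute)
  also have "\<dots> \<ge> 0" by (intro mult_nonneg_nonneg sum_nonneg) auto
  finally show "0 \<le> x \<bullet> (sample_cov Y n \<omega> *v x)" .
qed

lemma symmetric_sample_cov: "symmetric_mat (sample_cov Y n \<omega> :: real^'n^'n)"
  using pos_semidef_sample_cov[of Y n \<omega>] unfolding pos_semidef_def by simp

lemma borel_measurable_sample_cov:
  assumes "\<And>i. Y i \<in> borel_measurable M"
  shows "(\<lambda>\<omega>. sample_cov Y n \<omega> :: real^'n^'n) \<in> borel_measurable M"
proof -
  have "continuous_on UNIV (outer :: real^'n \<Rightarrow> real^'n^'n)"
    unfolding outer_def by (intro continuous_on_vec_lambda continuous_intros)
  then show ?thesis
    unfolding sample_cov_def
    by (intro borel_measurable_scaleR borel_measurable_const borel_measurable_sum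
        borel_measurable_continuous_on[where f=outer] assms)
qed

locale iid_gaussian =
  fixes M :: "'a measure" and Sig :: "real^'p^'p" and Y :: "nat \<Rightarrow> 'a \<Rightarrow> real^'p"
  assumes prob: "prob_space M" and Sig: "pos_def Sig"
    and indep: "prob_space.indep_vars M (\<lambda>_. borel) Y UNIV"
    and distr: "\<And>i. distributed M lborel (Y i) (\<lambda>x. ennreal (mvn_density Sig x))"
begin

sublocale prob_space M by (rule prob)

lemma borel_measurable_Y: "Y i \<in> borel_measurable M"
  using distributed_measurable[OF distr] by (simp add: measurable_lborel2)

lemma integral_Y_eq_integral_Y0:
  assumes g: "(g :: real^'p \<Rightarrow> real) \<in> borel_measurable borel"
  shows "(\<integral>\<omega>. g (Y i \<omega>) \<partial>M) = (\<integral>\<omega>. g (Y 0 \<omega>) \<partial>M)"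
proof -
  have g': "g \<in> borel_measurable lborel" using g by (simp add: measurable_lborel1)
  have "distr M lborel (Y i) = distr M lborel (Y 0)"
    using distributed_distr_eq_density[OF distr[of i]] distributed_distr_eq_density[OF distr[of 0]] by simp
  then show ?thesis
    using integral_distr[OF distributed_measurable[OF distr] g'] by metis
qed

definition cov_dev :: "'p \<Rightarrow> 'p \<Rightarrow> nat \<Rightarrow> 'a \<Rightarrow> real" where
  "cov_dev j k i \<omega> = Y i \<omega> $ j * Y i \<omega> $ k - Sig $ j $ k"

lemma borel_measurable_cov_dev[measurable]: "cov_dev j k i \<in> borel_measurable M"
  unfolding cov_dev_def using borel_measurable_Y by measurable

lemma
  shows integrable_cov_dev: "integrable M (cov_dev j k i)"
    and integral_cov_dev: "(\<integral>\<omega>. cov_dev j k i \<omega> \<partial>M) = 0"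
    and integrable_cov_dev_square: "integrable M (\<lambda>\<omega>. (cov_dev j k i \<omega>)\<^sup>2)"
proof -
  note moments = mvn_product_moments[OF prob Sig distr[of i], of j k]
  show "integrable M (cov_dev j k i)" unfolding cov_dev_def using moments(1) by auto
  show "(\<integral>\<omega>. cov_dev j k i \<omega> \<partial>M) = 0" unfolding cov_dev_def
    using moments(1,2) by (simp add: Bochner_Integration.integral_diff prob_space)
  have "(\<lambda>\<omega>. (cov_dev j k i \<omega>)\<^sup>2) = (\<lambda>\<omega>. (Y i \<omega> $ j * Y i \<omega> $ k)\<^sup>2
      - 2 * Sig $ j $ k * (Y i \<omega> $ j * Y i \<omega> $ k) + (Sig $ j $ k)\<^sup>2)"
    unfolding cov_dev_def by (simp add: power2_eq_square algebra_simps)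
  moreover have "integrable M \<dots>"
    by (intro Bochner_Integration.integrable_add Bochner_Integration.integrable_diff integrable_mult_right
        moments(1,3) integrable_const)
  ultimately show "integrable M (\<lambda>\<omega>. (cov_dev j k i \<omega>)\<^sup>2)" by simp
qed

lemma integrable_cov_dev_mult: "integrable M (\<lambda>\<omega>. cov_dev j k i \<omega> * cov_dev j k l \<omega>)"
proof (rule Bochner_Integration.integrable_bound)
  show "integrable M (\<lambda>\<omega>. (cov_dev j k i \<omega>)\<^sup>2 + (cov_dev j k l \<omega>)\<^sup>2)"
    using integrable_cov_dev_square by auto
  show "AE \<omega> in M. norm (cov_dev j k i \<omega> * cov_dev j k l \<omega>) \<le> norm ((cov_dev j k i \<omega>)\<^sup>2 + (cov_dev j k l \<omega>)\<^sup>2)"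
  proof (rule AE_I2)
    fix \<omega>
    have "\<bar>a * b\<bar> \<le> a\<^sup>2 + b\<^sup>2" for a b :: real
    proof -
      have "0 \<le> (\<bar>a\<bar> - \<bar>b\<bar>)\<^sup>2" by simp
      then have "2 * (\<bar>a\<bar> * \<bar>b\<bar>) \<le> a\<^sup>2 + b\<^sup>2" by (simp add: power2_diff power2_abs mult.assoc)
      moreover have "0 \<le> \<bar>a\<bar> * \<bar>b\<bar>" by simp
      ultimately show ?thesis unfolding abs_mult by linarith
    qed
    then show "norm (cov_dev j k i \<omega> * cov_dev j k l \<omega>) \<le> norm ((cov_dev j k i \<omega>)\<^sup>2 + (cov_dev j k l \<omega>)\<^sup>2)"
      by simp
  qed
qed measurable

lemma integral_cov_dev_mult:
  assumes "i \<noteq> l"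
  shows "(\<integral>\<omega>. cov_dev j k i \<omega> * cov_dev j k l \<omega> \<partial>M) = 0"
proof -
  have "indep_vars (\<lambda>_. borel) (\<lambda>m \<omega>. (\<lambda>y. y $ j * y $ k - Sig $ j $ k) (Y m \<omega>)) UNIV"
    by (rule indep_vars_compose2[OF indep]) measurable
  then have "indep_vars (\<lambda>_. borel) (cov_dev j k) {i, l}"
    unfolding cov_dev_def[abs_def] by (rule indep_vars_subset) auto
  then have "(\<integral>\<omega>. (\<Prod>m\<in>{i,l}. cov_dev j k m \<omega>) \<partial>M) = (\<Prod>m\<in>{i,l}. (\<integral>\<omega>. cov_dev j k m \<omega> \<partial>M))"
    by (intro indep_vars_lebesgue_integral) (auto intro: integrable_cov_dev)
  then show ?thesis using assms by (simp add: integral_cov_dev)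
qed

lemma integral_sum_cov_dev_square:
  "(\<integral>\<omega>. (\<Sum>i<n. cov_dev j k i \<omega>)\<^sup>2 \<partial>M) = real n * (\<integral>\<omega>. (cov_dev j k 0 \<omega>)\<^sup>2 \<partial>M)"
proof -
  have square: "(\<lambda>\<omega>. (\<Sum>i<n. cov_dev j k i \<omega>)\<^sup>2) = (\<lambda>\<omega>. \<Sum>i<n. \<Sum>l<n. cov_dev j k i \<omega> * cov_dev j k l \<omega>)"
    by (simp add: power2_eq_square sum_product)
  have "(\<integral>\<omega>. (\<Sum>i<n. cov_dev j k i \<omega>)\<^sup>2 \<partial>M) = (\<Sum>i<n. \<Sum>l<n. (\<integral>\<omega>. cov_dev j k i \<omega> * cov_dev j k l \<omega> \<partial>M))"
    unfolding square
    by (simp add: Bochner_Integration.integral_sum Bochner_Integration.integrable_sum integrable_cov_dev_mult)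
  also have "\<dots> = (\<Sum>i<n. (\<integral>\<omega>. (cov_dev j k i \<omega>)\<^sup>2 \<partial>M))"
  proof (rule sum.cong[OF refl])
    fix i assume "i \<in> {..<n}"
    then have "(\<Sum>l<n. (\<integral>\<omega>. cov_dev j k i \<omega> * cov_dev j k l \<omega> \<partial>M))
        = (\<Sum>l\<in>{i}. (\<integral>\<omega>. cov_dev j k i \<omega> * cov_dev j k l \<omega> \<partial>M))"
      by (intro sum.mono_neutral_right) (auto simp: integral_cov_dev_mult)
    then show "(\<Sum>l<n. (\<integral>\<omega>. cov_dev j k i \<omega> * cov_dev j k l \<omega> \<partial>M)) = (\<integral>\<omega>. (cov_dev j k i \<omega>)\<^sup>2 \<partial>M)"
      by (simp add: power2_eq_square)
  qed
  also have "\<dots> = (\<Sum>i<n. (\<integral>\<omega>. (cov_dev j k 0 \<omega>)\<^sup>2 \<partial>M))"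
    unfolding cov_dev_def
    by (intro sum.cong refl integral_Y_eq_integral_Y0[of "\<lambda>y. (y $ j * y $ k - Sig $ j $ k)\<^sup>2"]) measurable
  finally show ?thesis by simp
qed

lemma sample_cov_entry_dev:
  "0 < n \<Longrightarrow> sample_cov Y n \<omega> $ j $ k - Sig $ j $ k = (\<Sum>i<n. cov_dev j k i \<omega>) / real n"
  unfolding sample_cov_entry cov_dev_def by (simp add: sum_subtractf field_simps)

lemma integrable_sample_cov_entry_dev: "integrable M (\<lambda>\<omega>. (sample_cov Y n \<omega> $ j $ k - Sig $ j $ k)\<^sup>2)"
proof (cases "n = 0")
  case False
  have "integrable M (\<lambda>\<omega>. (\<Sum>i<n. cov_dev j k i \<omega>)\<^sup>2 / (real n)\<^sup>2)"
    by (simp add: power2_eq_square sum_product Bochner_Integration.integrable_sum integrable_cov_dev_mult)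
  then show ?thesis using False by (simp add: sample_cov_entry_dev power_divide)
qed (simp add: sample_cov_def)

lemma integrable_mean_square_sample_cov: "integrable M (\<lambda>\<omega>. (norm (sample_cov Y n \<omega> - Sig))\<^sup>2)"
  unfolding power2_norm_matrix by (simp add: Bochner_Integration.integrable_sum integrable_sample_cov_entry_dev)

lemma mean_square_sample_cov:
  assumes "0 < n"
  shows "(\<integral>\<omega>. (norm (sample_cov Y n \<omega> - Sig))\<^sup>2 \<partial>M)
           = (\<Sum>j\<in>UNIV. \<Sum>k\<in>UNIV. (\<integral>\<omega>. (cov_dev j k 0 \<omega>)\<^sup>2 \<partial>M)) / real n"
proof -
  have "(\<integral>\<omega>. (sample_cov Y n \<omega> $ j $ k - Sig $ j $ k)\<^sup>2 \<partial>M) = (\<integral>\<omega>. (cov_dev j k 0 \<omega>)\<^sup>2 \<partial>M) / real n"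
    for j k
  proof -
    have "(\<integral>\<omega>. (sample_cov Y n \<omega> $ j $ k - Sig $ j $ k)\<^sup>2 \<partial>M)
        = (\<integral>\<omega>. (\<Sum>i<n. cov_dev j k i \<omega>)\<^sup>2 \<partial>M) / (real n)\<^sup>2"
      using assms by (simp add: sample_cov_entry_dev power_divide)
    also have "\<dots> = (\<integral>\<omega>. (cov_dev j k 0 \<omega>)\<^sup>2 \<partial>M) / real n"
      using assms by (simp only: integral_sum_cov_dev_square) (simp add: power2_eq_square)
    finally show ?thesis .
  qed
  then show ?thesis unfolding power2_norm_matrix
    by (simp add: Bochner_Integration.integral_sum Bochner_Integration.integrable_sum
        integrable_sample_cov_entry_dev sum_divide_distrib)
qed

lemma mean_square_sample_cov_tendsto_0:
  "(\<lambda>n. \<integral>\<omega>. (norm (sample_cov Y n \<omega> - Sig))\<^sup>2 \<partial>M) \<longlonglongrightarrow> 0"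
proof (rule Lim_transform_eventually[OF lim_const_over_n])
  show "\<forall>\<^sub>F n in sequentially. (\<Sum>j\<in>UNIV. \<Sum>k\<in>UNIV. (\<integral>\<omega>. (cov_dev j k 0 \<omega>)\<^sup>2 \<partial>M)) / real n
      = (\<integral>\<omega>. (norm (sample_cov Y n \<omega> - Sig))\<^sup>2 \<partial>M)"
    using eventually_gt_at_top[of 0] by eventually_elim (simp add: mean_square_sample_cov)
qed

end

section \<open>Convergence in mean square and in probability\<close>

lemma measure_gt_tendsto_0_of_AE_tendsto_0:
  assumes M: "prob_space M" and l: "\<And>n. l n \<in> borel_measurable M"
    and lim: "AE x in M. (\<lambda>n. l n x) \<longlonglongrightarrow> 0" and d: "0 < (d::real)"
  shows "(\<lambda>n. measure M {x \<in> space M. d < l n x}) \<longlonglongrightarrow> 0"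
proof -
  define A where "A n = {x \<in> space M. d < l n x}" for n
  have A: "A n \<in> sets M" for n unfolding A_def using l by measurable
  have "(\<lambda>n. \<integral>x. (indicator (A n) x :: real) \<partial>M) \<longlonglongrightarrow> (\<integral>x. (0::real) \<partial>M)"
  proof (rule integral_dominated_convergence[where w="\<lambda>_. 1" and s="\<lambda>n. indicator (A n)" and f="\<lambda>_. 0"])
    show "integrable M (\<lambda>x. 1::real)" using M by (simp add: prob_space_def finite_measure.integrable_const)
    show "AE x in M. (\<lambda>n. indicator (A n) x :: real) \<longlonglongrightarrow> 0"
      using lim
    proof (rule AE_mp[OF _ AE_I2], intro impI)
      fix x assume "(\<lambda>n. l n x) \<longlonglongrightarrow> 0"
      then have "\<forall>\<^sub>F n in sequentially. l n x < d" using d by (rule order_tendstoD)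
      then have "\<forall>\<^sub>F n in sequentially. indicator (A n) x = (0::real)"
        by eventually_elim (auto simp: A_def indicator_def)
      then show "(\<lambda>n. indicator (A n) x :: real) \<longlonglongrightarrow> 0" by (rule tendsto_eventually)
    qed
  qed (use A in \<open>auto simp: indicator_def\<close>)
  moreover have "(\<integral>x. (indicator (A n) x :: real) \<partial>M) = measure M (A n)" for n
    using A by simp
  ultimately show ?thesis unfolding A_def by simp
qed

lemma truncation_bound:
  fixes f u l C d :: real
  assumes "0 \<le> u" "0 \<le> l" "0 \<le> C" "0 < d" "d \<le> 1"
    and growth: "f \<le> C * (1 + u)" and local: "u \<le> 1 \<Longrightarrow> l \<le> 1 \<Longrightarrow> f \<le> C * (u + l\<^sup>2)"
  shows "f \<le> C * d\<^sup>2 + C * (if d < l then 1 else 0) + C * (1 + 1 / d\<^sup>2) * u"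
proof -
  have Cu: "C * u \<le> C * (1 + 1 / d\<^sup>2) * u" using assms(1,3) by (simp add: algebra_simps)
  have "0 \<le> C * d\<^sup>2" "0 \<le> C * (if d < l then 1 else 0)" using assms(3) by simp_all
  consider "d < l" | "\<not> d < l" "d\<^sup>2 < u" | "l \<le> d" "u \<le> d\<^sup>2" by linarith
  then show ?thesis
  proof cases
    case 1
    then show ?thesis using growth Cu \<open>0 \<le> C * d\<^sup>2\<close> by (simp add: algebra_simps)
  next
    case 2
    then have "1 \<le> u / d\<^sup>2" using assms(4) by simp
    then have "C * (1 + u) \<le> C * (1 + 1 / d\<^sup>2) * u"
      using assms(3) mult_left_mono[of 1 "u / d\<^sup>2" C] by (simp add: algebra_simps)
    then show ?thesis using growth 2 \<open>0 \<le> C * d\<^sup>2\<close> by simp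
  next
    case 3
    then have "l\<^sup>2 \<le> d\<^sup>2" using assms(2) by (simp add: power_mono)
    moreover have "d\<^sup>2 \<le> 1" using assms(4,5) by (simp add: power_le_one)
    ultimately have "f \<le> C * (u + d\<^sup>2)"
      using local[of] 3 assms(3,5) mult_left_mono[of "u + l\<^sup>2" "u + d\<^sup>2" C] by linarith
    then have "f \<le> C * u + C * d\<^sup>2" by (simp add: algebra_simps)
    then show ?thesis using Cu \<open>0 \<le> C * (if d < l then 1 else 0)\<close> by linarith
  qed
qed

lemma tendsto_0_of_bound_by_tendsto_0:
  fixes F :: "nat \<Rightarrow> real" and G :: "real \<Rightarrow> nat \<Rightarrow> real"
  assumes nonneg: "\<And>n. 0 \<le> F n" and C: "0 \<le> C"
    and bound: "\<And>d n. 0 < d \<Longrightarrow> d \<le> 1 \<Longrightarrow> F n \<le> C * d\<^sup>2 + G d n"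
    and G: "\<And>d. 0 < d \<Longrightarrow> d \<le> 1 \<Longrightarrow> G d \<longlonglongrightarrow> 0"
  shows "F \<longlonglongrightarrow> 0"
proof (rule order_tendstoI)
  fix a :: real assume "a < 0"
  then show "\<forall>\<^sub>F n in sequentially. a < F n" using nonneg by (intro always_eventually allI) (rule less_le_trans)
next
  fix a :: real assume a: "0 < a"
  define d where "d = sqrt (min 1 (a / (2 * C + 2)))"
  have d: "0 < d" "d \<le> 1" unfolding d_def using a C by auto
  have "C * d\<^sup>2 \<le> C * (a / (2 * C + 2))" unfolding d_def using a C by (intro mult_left_mono) auto
  also have "\<dots> < a / 2" using a C by (simp add: field_simps)
  finally have small: "C * d\<^sup>2 < a / 2" .
  have "\<forall>\<^sub>F n in sequentially. G d n < a / 2" using order_tendstoD(2)[OF G[OF d], of "a / 2"] a by simp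
  then show "\<forall>\<^sub>F n in sequentially. F n < a"
  proof eventually_elim
    case (elim n)
    then show ?case using bound[OF d, of n] small by linarith
  qed
qed

text \<open>Split according to whether \<open>u\<close> and \<open>l\<close> are small: where they are, the local bound applies;
  the rest has small probability (for \<open>l\<close>) or is controlled by Markov's inequality (for \<open>u\<close>).\<close>
lemma integral_tendsto_0_by_truncation:
  fixes f u l :: "nat \<Rightarrow> 'a \<Rightarrow> real"
  assumes M: "prob_space M" and f: "\<And>n. f n \<in> borel_measurable M" and u: "\<And>n. integrable M (u n)"
    and nonneg: "\<And>n x. x \<in> space M \<Longrightarrow> 0 \<le> f n x \<and> 0 \<le> u n x \<and> 0 \<le> l n x" and C: "0 \<le> C"
    and growth: "\<And>n x. x \<in> space M \<Longrightarrow> f n x \<le> C * (1 + u n x)"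
    and local: "\<And>n x. x \<in> space M \<Longrightarrow> u n x \<le> 1 \<Longrightarrow> l n x \<le> 1 \<Longrightarrow> f n x \<le> C * (u n x + (l n x)\<^sup>2)"
    and u_lim: "(\<lambda>n. \<integral>x. u n x \<partial>M) \<longlonglongrightarrow> 0"
    and l: "\<And>n. l n \<in> borel_measurable M"
    and l_lim: "\<And>d. 0 < d \<Longrightarrow> (\<lambda>n. measure M {x \<in> space M. d < l n x}) \<longlonglongrightarrow> 0"
  shows "integrable M (f n)" "(\<lambda>n. \<integral>x. f n x \<partial>M) \<longlonglongrightarrow> 0"
proof -
  interpret prob_space M by (rule M)
  show integrable: "integrable M (f n)" for n
  proof (rule Bochner_Integration.integrable_bound)
    show "integrable M (\<lambda>x. C * (1 + u n x))" using u by auto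
    show "AE x in M. norm (f n x) \<le> norm (C * (1 + u n x))"
    proof (rule AE_I2)
      fix x assume x: "x \<in> space M"
      then have "0 \<le> f n x" "0 \<le> u n x" using nonneg by auto
      then show "norm (f n x) \<le> norm (C * (1 + u n x))" using growth[OF x] C by simp
    qed
  qed (rule f)
  define A where "A n d = {x \<in> space M. d < l n x}" for n d
  have A: "A n d \<in> sets M" for n d unfolding A_def using l by measurable
  have bound: "(\<integral>x. f n x \<partial>M) \<le> C * d\<^sup>2 + (C * measure M (A n d) + C * (1 + 1 / d\<^sup>2) * (\<integral>x. u n x \<partial>M))"
    if d: "0 < d" "d \<le> 1" for n d
  proof -
    have "(\<integral>x. f n x \<partial>M) \<le> (\<integral>x. C * d\<^sup>2 + C * indicator (A n d) x + C * (1 + 1 / d\<^sup>2) * u n x \<partial>M)"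
    proof (rule integral_mono_AE[OF integrable])
      show "integrable M (\<lambda>x. C * d\<^sup>2 + C * indicator (A n d) x + C * (1 + 1 / d\<^sup>2) * u n x)"
        using A u by (intro Bochner_Integration.integrable_add integrable_mult_right integrable_real_indicator)
          (auto simp: emeasure_finite less_top[symmetric])
      show "AE x in M. f n x \<le> C * d\<^sup>2 + C * indicator (A n d) x + C * (1 + 1 / d\<^sup>2) * u n x"
      proof (rule AE_I2)
        fix x assume x: "x \<in> space M"
        then have "indicator (A n d) x = (if d < l n x then 1 else 0 :: real)" by (simp add: A_def)
        then show "f n x \<le> C * d\<^sup>2 + C * indicator (A n d) x + C * (1 + 1 / d\<^sup>2) * u n x"
          using truncation_bound[OF _ _ C d growth[OF x] local[OF x]] nonneg[OF x] by simp
      qed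
    qed
    also have "\<dots> = C * d\<^sup>2 + (C * measure M (A n d) + C * (1 + 1 / d\<^sup>2) * (\<integral>x. u n x \<partial>M))"
      using A u by (simp add: Bochner_Integration.integral_add Bochner_Integration.integrable_add
          integrable_real_indicator emeasure_finite less_top[symmetric] prob_space add.assoc)
    finally show ?thesis .
  qed
  show "(\<lambda>n. \<integral>x. f n x \<partial>M) \<longlonglongrightarrow> 0"
  proof (rule tendsto_0_of_bound_by_tendsto_0[OF _ C bound])
    show "0 \<le> (\<integral>x. f n x \<partial>M)" for n using nonneg by (intro integral_nonneg_AE AE_I2) auto
    show "(\<lambda>n. C * measure M (A n d) + C * (1 + 1 / d\<^sup>2) * (\<integral>x. u n x \<partial>M)) \<longlonglongrightarrow> 0" if "0 < d" for d
      unfolding A_def using l_lim[OF that] u_lim by (intro tendsto_add_zero tendsto_mult_right_zero)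
  qed
qed

text \<open>Markov's inequality turns mean square convergence into convergence in probability, which
  is preserved by a map continuous at the limit.\<close>
lemma conv_in_prob_of_mean_square:
  fixes X :: "nat \<Rightarrow> 'a \<Rightarrow> real^'n^'m" and g :: "real^'n^'m \<Rightarrow> real^'k^'l"
  assumes M: "prob_space M" and X: "\<And>n. X n \<in> borel_measurable M"
    and integrable: "\<And>n. integrable M (\<lambda>x. (norm (X n x - L))\<^sup>2)"
    and lim: "(\<lambda>n. \<integral>x. (norm (X n x - L))\<^sup>2 \<partial>M) \<longlonglongrightarrow> 0"
    and g: "g \<in> borel_measurable borel" and cont: "isCont g L"
  shows "conv_in_prob M (\<lambda>n x. g (X n x)) (g L)"
  unfolding conv_in_prob_def
proof (intro conjI allI impI)
  interpret prob_space M by (rule M)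
  show "(\<lambda>x. g (X n x)) \<in> borel_measurable M" for n using measurable_compose[OF X g] .
  fix e :: real assume "e > 0"
  then obtain \<eta> where \<eta>: "\<eta> > 0" "\<And>Z. dist Z L < \<eta> \<Longrightarrow> dist (g Z) (g L) < e"
    using cont unfolding continuous_at_eps_delta by blast
  have bound: "measure M {x \<in> space M. e < frob_norm (g (X n x) - g L)}
      \<le> (\<integral>x. (norm (X n x - L))\<^sup>2 \<partial>M) / \<eta>\<^sup>2" for n
  proof -
    have "{x \<in> space M. e < frob_norm (g (X n x) - g L)} \<subseteq> {x \<in> space M. \<eta>\<^sup>2 \<le> (norm (X n x - L))\<^sup>2}"
    proof safe
      fix x assume "e < frob_norm (g (X n x) - g L)"
      then have "\<not> dist (X n x) L < \<eta>"
        using \<eta>(2)[of "X n x"] unfolding frob_norm_eq_norm dist_norm by linarith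
      then have "\<eta> \<le> norm (X n x - L)" by (simp add: dist_norm)
      then show "\<eta>\<^sup>2 \<le> (norm (X n x - L))\<^sup>2" using \<eta>(1) by (simp add: power_mono)
    qed
    moreover have "{x \<in> space M. \<eta>\<^sup>2 \<le> (norm (X n x - L))\<^sup>2} \<in> sets M"
      using X by measurable
    ultimately have "measure M {x \<in> space M. e < frob_norm (g (X n x) - g L)}
        \<le> measure M {x \<in> space M. \<eta>\<^sup>2 \<le> (norm (X n x - L))\<^sup>2}"
      by (rule finite_measure_mono)
    also have "\<dots> \<le> (\<integral>x. (norm (X n x - L))\<^sup>2 \<partial>M) / \<eta>\<^sup>2"
      by (rule integral_Markov_inequality_measure[OF integrable sets.top]) (use \<eta> in auto)
    finally show ?thesis .
  qed
  show "(\<lambda>n. measure M {x \<in> space M. e < frob_norm (g (X n x) - g L)}) \<longlonglongrightarrow> 0"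
  proof (rule tendsto_sandwich[OF _ _ tendsto_const tendsto_divide_zero[OF lim]])
    show "\<forall>\<^sub>F n in sequentially. 0 \<le> measure M {x \<in> space M. e < frob_norm (g (X n x) - g L)}"
      by simp
    show "\<forall>\<^sub>F n in sequentially. measure M {x \<in> space M. e < frob_norm (g (X n x) - g L)}
        \<le> (\<integral>x. (norm (X n x - L))\<^sup>2 \<partial>M) / \<eta>\<^sup>2"
      using bound by simp
  qed
qed

lemma (in iid_gaussian) borel_measurable_sigma_hat_Ia_sample_cov:
  assumes "\<And>n. lam n \<in> borel_measurable M" "\<And>n \<omega>. \<omega> \<in> space M \<Longrightarrow> 0 \<le> lam n \<omega>" "symmetric_mat T"
  shows "(\<lambda>\<omega>. sigma_hat_Ia (sample_cov Y n \<omega>) T (lam n \<omega>)) \<in> borel_measurable M"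
  by (rule borel_measurable_sigma_hat_Ia[OF borel_measurable_sample_cov[OF borel_measurable_Y]
        assms(1) symmetric_sample_cov assms(2,3)])

lemma (in iid_gaussian) mean_square_sigma_hat_Ia_tendsto_0:
  fixes lam :: "nat \<Rightarrow> 'a \<Rightarrow> real" and T :: "real^'p^'p"
  assumes lam: "\<And>n. lam n \<in> borel_measurable M" and nonneg: "\<And>n \<omega>. \<omega> \<in> space M \<Longrightarrow> 0 \<le> lam n \<omega>"
    and lim: "AE \<omega> in M. (\<lambda>n. lam n \<omega>) \<longlonglongrightarrow> 0" and T: "pos_def T"
  shows "integrable M (\<lambda>\<omega>. (norm (sigma_hat_Ia (sample_cov Y n \<omega>) T (lam n \<omega>) - Sig))\<^sup>2)"
    and "(\<lambda>n. \<integral>\<omega>. (norm (sigma_hat_Ia (sample_cov Y n \<omega>) T (lam n \<omega>) - Sig))\<^sup>2 \<partial>M) \<longlonglongrightarrow> 0"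
proof -
  have "symmetric_mat T" using T pos_def_def by auto
  define X where "X n \<omega> = sigma_hat_Ia (sample_cov Y n \<omega>) T (lam n \<omega>)" for n \<omega>
  have "X n \<in> borel_measurable M" for n unfolding X_def[abs_def]
    by (rule borel_measurable_sigma_hat_Ia_sample_cov[OF lam nonneg \<open>symmetric_mat T\<close>])
  then have measurable: "(\<lambda>\<omega>. (norm (X n \<omega> - Sig))\<^sup>2) \<in> borel_measurable M" for n by measurable
  obtain C where C: "0 \<le> C"
    "\<And>S lam. pos_semidef S \<Longrightarrow> 0 \<le> lam \<Longrightarrow>
       (norm (sigma_hat_Ia S T lam - Sig))\<^sup>2 \<le> C * (1 + (norm (S - Sig))\<^sup>2)"
    "\<And>S lam. symmetric_mat S \<Longrightarrow> 0 \<le> lam \<Longrightarrow> (norm (S - Sig))\<^sup>2 \<le> 1 \<Longrightarrow> lam \<le> 1 \<Longrightarrow>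
       (norm (sigma_hat_Ia S T lam - Sig))\<^sup>2 \<le> C * ((norm (S - Sig))\<^sup>2 + lam\<^sup>2)"
    using sigma_hat_Ia_square_error_bounds[OF Sig T] by blast
  have nonneg': "0 \<le> (norm (X n \<omega> - Sig))\<^sup>2 \<and> 0 \<le> (norm (sample_cov Y n \<omega> - Sig))\<^sup>2 \<and> 0 \<le> lam n \<omega>"
    if "\<omega> \<in> space M" for n \<omega>
    using nonneg[OF that] by simp
  have growth: "(norm (X n \<omega> - Sig))\<^sup>2 \<le> C * (1 + (norm (sample_cov Y n \<omega> - Sig))\<^sup>2)"
    if "\<omega> \<in> space M" for n \<omega>
    unfolding X_def by (rule C(2)[OF pos_semidef_sample_cov nonneg[OF that]])
  have local: "(norm (X n \<omega> - Sig))\<^sup>2 \<le> C * ((norm (sample_cov Y n \<omega> - Sig))\<^sup>2 + (lam n \<omega>)\<^sup>2)"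
    if "\<omega> \<in> space M" "(norm (sample_cov Y n \<omega> - Sig))\<^sup>2 \<le> 1" "lam n \<omega> \<le> 1" for n \<omega>
    unfolding X_def by (rule C(3)[OF symmetric_sample_cov nonneg[OF that(1)] that(2,3)])
  note mean_square = integral_tendsto_0_by_truncation[OF prob measurable integrable_mean_square_sample_cov
      nonneg' C(1) growth local mean_square_sample_cov_tendsto_0 lam
      measure_gt_tendsto_0_of_AE_tendsto_0[OF prob lam lim]]
  then show "integrable M (\<lambda>\<omega>. (norm (sigma_hat_Ia (sample_cov Y n \<omega>) T (lam n \<omega>) - Sig))\<^sup>2)"
    and "(\<lambda>n. \<integral>\<omega>. (norm (sigma_hat_Ia (sample_cov Y n \<omega>) T (lam n \<omega>) - Sig))\<^sup>2 \<partial>M) \<longlonglongrightarrow> 0"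
    unfolding X_def by blast+
qed

theorem proposition2:
  fixes M :: "'a measure"
    and Sig T :: "real ^ 'p ^ 'p"
    and Y :: "nat \<Rightarrow> 'a \<Rightarrow> real ^ 'p"
    and lam :: "nat \<Rightarrow> 'a \<Rightarrow> real"
  assumes "prob_space M"
    and "pos_def Sig"
    and "prob_space.indep_vars M (\<lambda>_. borel) Y UNIV"
    and "\<And>i. distributed M lborel (Y i) (\<lambda>x. ennreal (mvn_density Sig x))"
    and "\<And>n. lam n \<in> borel_measurable M"
    and "\<And>n \<omega>. \<omega> \<in> space M \<Longrightarrow> 0 \<le> lam n \<omega>"
    and "AE \<omega> in M. (\<lambda>n. lam n \<omega>) \<longlonglongrightarrow> 0"
    and "pos_def T"
  shows "((\<forall>\<^sub>F n in sequentially. integrable M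
            (\<lambda>\<omega>. (frob_norm (sigma_hat_Ia (sample_cov Y n \<omega>) T (lam n \<omega>) - Sig))\<^sup>2))
       \<and> (\<lambda>n. integral\<^sup>L M
            (\<lambda>\<omega>. (frob_norm (sigma_hat_Ia (sample_cov Y n \<omega>) T (lam n \<omega>) - Sig))\<^sup>2))
         \<longlonglongrightarrow> 0)
       \<and> conv_in_prob M (\<lambda>n \<omega>. matrix_inv (sigma_hat_Ia (sample_cov Y n \<omega>) T (lam n \<omega>)))
           (matrix_inv Sig)"
proof -
  interpret iid_gaussian M Sig Y by (rule iid_gaussian.intro) (fact assms)+
  have "symmetric_mat T" using assms(8) pos_def_def by auto
  note estimator = borel_measurable_sigma_hat_Ia_sample_cov[OF assms(5,6) this]
  note mean_square = mean_square_sigma_hat_Ia_tendsto_0[OF assms(5,6,7,8)]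
  have "isCont matrix_inv Sig"
    using pos_def_invertible[OF assms(2)] invertible_det_nz by (intro isCont_matrix_inv) auto
  then have "conv_in_prob M (\<lambda>n \<omega>. matrix_inv (sigma_hat_Ia (sample_cov Y n \<omega>) T (lam n \<omega>))) (matrix_inv Sig)"
    by (intro conv_in_prob_of_mean_square[OF assms(1) estimator] mean_square borel_measurable_matrix_inv)
  with mean_square show ?thesis unfolding frob_norm_eq_norm by simp
qed

end
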